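(* The centre $Z(F)$ of $F$ satisfies $Z(F)=K\oplus I$, where $K$ denotes the scalar matrices $K\cdot 1$ and $I$ is a nilpotent ideal of $F$ (not only of $Z(F)$).
   Context: $K$ is an infinite field of characteristic different from 2. Let $X=\{x_1,x_2,x_1',x_2'\}$ and $Y=\{y_1,y_2,y_1',y_2'\}$, and let $K[X;Y]\cong K[X]\otimes_K E(Y)$ be the free supercommutative algebra: the $x$'s are even commuting variables, the $y$'s are odd pairwise anticommuting variables, and $E(Y)$ is the Grassmann algebra on the vector space with basis $Y$. Put $C_1=\begin{pmatrix} x_1&y_1\\ y_1'&x_1'\end{pmatrix}$, $C_2=\begin{pmatrix} x_2&y_2\\ y_2'&x_2'\end{pmatrix}$, and let $F=K[C_1,C_2]$ be the unital $K$-subalgebra of $M_2(K[X;Y])$ generated by $C_1,C_2$; $F$ is isomorphic to the relatively free (generic) algebra of rank 2 of $M_{11}(E)$, where $E$ is the infinite dimensional Grassmann algebra and $M_{11}(E)$ is the algebra of $2\times 2$ matrices over $E$ with even diagonal and odd off-diagonal entries. *)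

theory Defs
  imports "HOL-Library.Poly_Mapping"
begin

text \<open>The free supercommutative algebra K[X;Y] = K[X] (x) E(Y).
  Even variables x_0,x_1,x_2,x_3 stand for x1,x2,x1',x2'; odd variables
  y_0,y_1,y_2,y_3 stand for y1,y2,y1',y2'.  An element is the coefficient
  function on basis monomials  x^m * y_S, where m is an exponent vector and
  S a finite set of odd indices, with y_S the product of the y_i, i in S,
  in increasing order.\<close>

type_synonym 'k sc = "(nat \<Rightarrow>\<^sub>0 nat) \<times> nat set \<Rightarrow> 'k"

definition sc_sign :: "nat set \<Rightarrow> nat set \<Rightarrow> 'k::field" where
  "sc_sign S T = (- 1) ^ card {(i, j). i \<in> S \<and> j \<in> T \<and> j < i}"

definition sc_add :: "'k::field sc \<Rightarrow> 'k sc \<Rightarrow> 'k sc" where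
  "sc_add a b = (\<lambda>u. a u + b u)"

definition sc_scale :: "'k::field \<Rightarrow> 'k sc \<Rightarrow> 'k sc" where
  "sc_scale c a = (\<lambda>u. c * a u)"

definition sc_mult :: "'k::field sc \<Rightarrow> 'k sc \<Rightarrow> 'k sc" where
  "sc_mult a b = (\<lambda>(m, S).
     \<Sum>(m1, m2) \<in> {(m1, m2). m1 + m2 = m}.
       \<Sum>(S1, S2) \<in> {(S1, S2). S1 \<union> S2 = S \<and> S1 \<inter> S2 = {}}.
         sc_sign S1 S2 * a (m1, S1) * b (m2, S2))"

definition sc_zero :: "'k::field sc" where
  "sc_zero = (\<lambda>_. 0)"

definition sc_one :: "'k::field sc" where
  "sc_one = (\<lambda>u. if u = (0, {}) then 1 else 0)"

definition xvar :: "nat \<Rightarrow> 'k::field sc" where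
  "xvar i = (\<lambda>u. if u = (Poly_Mapping.single i 1, {}) then 1 else 0)"

definition yvar :: "nat \<Rightarrow> 'k::field sc" where
  "yvar i = (\<lambda>u. if u = (0, {i}) then 1 else 0)"

datatype ix = R1 | R2

type_synonym 'k mat2 = "ix \<Rightarrow> ix \<Rightarrow> 'k sc"

definition madd :: "'k::field mat2 \<Rightarrow> 'k mat2 \<Rightarrow> 'k mat2" where
  "madd A B = (\<lambda>i j. sc_add (A i j) (B i j))"

definition mscale :: "'k::field \<Rightarrow> 'k mat2 \<Rightarrow> 'k mat2" where
  "mscale c A = (\<lambda>i j. sc_scale c (A i j))"

definition mmul :: "'k::field mat2 \<Rightarrow> 'k mat2 \<Rightarrow> 'k mat2" where
  "mmul A B = (\<lambda>i j. sc_add (sc_mult (A i R1) (B R1 j)) (sc_mult (A i R2) (B R2 j)))"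

definition mzero :: "'k::field mat2" where
  "mzero = (\<lambda>i j. sc_zero)"

definition mone :: "'k::field mat2" where
  "mone = (\<lambda>i j. if i = j then sc_one else sc_zero)"

definition mprod :: "'k::field mat2 list \<Rightarrow> 'k mat2" where
  "mprod xs = foldr mmul xs mone"

definition genmat :: "nat \<Rightarrow> nat \<Rightarrow> 'k::field mat2" where
  "genmat a b = (\<lambda>i j. case (i, j) of
      (R1, R1) \<Rightarrow> xvar a | (R1, R2) \<Rightarrow> yvar a
    | (R2, R1) \<Rightarrow> yvar b | (R2, R2) \<Rightarrow> xvar b)"

definition C1 :: "'k::field mat2" where "C1 = genmat 0 2"
definition C2 :: "'k::field mat2" where "C2 = genmat 1 3"

inductive_set Falg :: "'k::field mat2 set" where
  one: "mone \<in> Falg"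
| gen1: "C1 \<in> Falg"
| gen2: "C2 \<in> Falg"
| add: "A \<in> Falg \<Longrightarrow> B \<in> Falg \<Longrightarrow> madd A B \<in> Falg"
| scale: "A \<in> Falg \<Longrightarrow> mscale c A \<in> Falg"
| mul: "A \<in> Falg \<Longrightarrow> B \<in> Falg \<Longrightarrow> mmul A B \<in> Falg"

definition centreF :: "'k::field mat2 set" where
  "centreF = {Z \<in> Falg. \<forall>A \<in> Falg. mmul Z A = mmul A Z}"

definition ideal_of_F :: "'k::field mat2 set \<Rightarrow> bool" where
  "ideal_of_F I \<longleftrightarrow> I \<subseteq> Falg \<and> mzero \<in> I
     \<and> (\<forall>A \<in> I. \<forall>B \<in> I. madd A B \<in> I)
     \<and> (\<forall>c. \<forall>A \<in> I. mscale c A \<in> I)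
     \<and> (\<forall>A \<in> Falg. \<forall>B \<in> I. mmul A B \<in> I \<and> mmul B A \<in> I)"

definition nilpotent_set :: "'k::field mat2 set \<Rightarrow> bool" where
  "nilpotent_set I \<longleftrightarrow> (\<exists>n \<ge> 1. \<forall>xs. length xs = n \<and> set xs \<subseteq> I \<longrightarrow> mprod xs = mzero)"

end

theory Submission
  imports Defs
begin

text \<open>Write an element of \<open>K[X;Y]\<close> through its polynomial coefficients in \<open>K[X]\<close> at the
  odd monomials \<open>y\<^sub>S\<close>.  Giving \<open>y\<^sub>1, y\<^sub>2\<close> weight \<open>1\<close> and \<open>y\<^sub>1', y\<^sub>2'\<close> weight
  \<open>-1\<close>, every element of \<open>F\<close> has diagonal entries of weight \<open>0\<close> and off-diagonal
  entries of weight \<open>\<plusminus>1\<close>; moreover its coefficients of odd degree \<open>\<le> 2\<close> satisfy a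
  few first-order differential relations that hold for \<open>C\<^sub>1, C\<^sub>2\<close> and are preserved
  by the algebra operations.

  Commuting with \<open>C\<^sub>1\<close> and \<open>C\<^sub>2\<close> kills the linear coefficients of a central element
  \<open>Z\<close> and makes its two even diagonal parts equal; by the relations, this common polynomial
  involves only \<open>x\<^sub>1, x\<^sub>2\<close> and only \<open>x\<^sub>1', x\<^sub>2'\<close>, hence is a scalar \<open>c\<close>.
  So \<open>Z - c\<close> lies in \<open>I\<close>, the central elements with vanishing even \<open>(1,1)\<close>-part.
  Elements of \<open>I\<close> have odd degree \<open>\<ge> 1\<close>, so products of five of them vanish, there
  being only four odd variables.  That \<open>I\<close> is an ideal of \<open>F\<close> reduces to
  \<open>Z (AB - BA) = 0\<close> for \<open>Z \<in> I\<close>, which is checked on the few top-degree coefficients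
  after multiplying them by powers of \<open>x\<^sub>1 - x\<^sub>1'\<close> or \<open>x\<^sub>2 - x\<^sub>2'\<close> in the domain
  \<open>K[X]\<close>.\<close>


section \<open>Polynomial coefficients of supercommutative elements\<close>

type_synonym 'k kpoly = "(nat \<Rightarrow>\<^sub>0 nat) \<Rightarrow>\<^sub>0 'k"

text \<open>The type \<open>'k sc\<close> also contains coefficient functions of infinite support; the
  elements of \<open>K[X;Y]\<close> are exactly the admissible ones.\<close>

definition admissible :: "'k::field sc \<Rightarrow> bool" where
 "admissible a \<longleftrightarrow> (\<forall>S. finite {m. a (m,S) \<noteq> 0}) \<and> (\<forall>m S. infinite S \<longrightarrow> a (m,S) = 0)"

definition coeff :: "'k::field sc \<Rightarrow> nat set \<Rightarrow> 'k kpoly" where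
 "coeff a S = Abs_poly_mapping (\<lambda>m. a (m,S))"

lemma lookup_coeff: "admissible a \<Longrightarrow> Poly_Mapping.lookup (coeff a S) m = a (m,S)"
proof -
  assume "admissible a"
  then have "finite {m. a(m,S) \<noteq> 0}" by (simp add: admissible_def)
  then show ?thesis unfolding coeff_def by simp
qed

lemma finite_sum_decompositions: "finite {(m1,m2). m1 + m2 = (m::nat\<Rightarrow>\<^sub>0nat)}"
proof -
  let ?B = "{..sum (Poly_Mapping.lookup m) (Poly_Mapping.keys m)}"
  define bounded where "bounded =
    {f. \<forall>x. (x \<in> Poly_Mapping.keys m \<longrightarrow> f x \<in> ?B) \<and> (x \<notin> Poly_Mapping.keys m \<longrightarrow> f x = 0)}"
  have fin: "finite bounded"
    unfolding bounded_def by (rule finite_set_of_finite_funs) auto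
  have sub: "Poly_Mapping.lookup ` {m1. \<exists>m2. m1 + m2 = m} \<subseteq> bounded"
    unfolding bounded_def
  proof (clarsimp, intro conjI allI impI)
    fix m1 m2 :: "nat \<Rightarrow>\<^sub>0 nat" and x assume x: "x \<in> Poly_Mapping.keys (m1 + m2)"
    have "Poly_Mapping.lookup m1 x \<le> Poly_Mapping.lookup (m1+m2) x" by (simp add: lookup_add)
    also have "\<dots> \<le> sum (Poly_Mapping.lookup (m1+m2)) (Poly_Mapping.keys (m1+m2))"
      using x by (intro member_le_sum) auto
    finally show "Poly_Mapping.lookup m1 x \<le> sum (Poly_Mapping.lookup (m1+m2)) (Poly_Mapping.keys (m1+m2))" .
  next
    fix m1 m2 :: "nat \<Rightarrow>\<^sub>0 nat" and x assume x: "x \<notin> Poly_Mapping.keys (m1 + m2)"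
    then show "Poly_Mapping.lookup m1 x = 0" by (simp add: in_keys_iff lookup_add)
  qed
  have inj: "inj_on Poly_Mapping.lookup {m1. \<exists>m2. m1 + m2 = m}"
    by (rule inj_onI) (simp add: poly_mapping_eqI)
  have f1: "finite {m1. \<exists>m2. m1 + m2 = m}"
    using finite_imageD[OF finite_subset[OF sub fin] inj] .
  have "{(m1,m2). m1 + m2 = m} \<subseteq> (\<lambda>m1. (m1, m - m1)) ` {m1. \<exists>m2. m1 + m2 = m}"
    by (auto simp: image_iff)
  then show ?thesis using f1 finite_subset by blast
qed

lemma lookup_times_Abs_poly_mapping:
  fixes f g :: "(nat \<Rightarrow>\<^sub>0 nat) \<Rightarrow> 'k::field"
  assumes "finite {x. f x \<noteq> 0}" "finite {x. g x \<noteq> 0}"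
  shows "Poly_Mapping.lookup (Abs_poly_mapping f * Abs_poly_mapping g) m
        = (\<Sum>(m1,m2)\<in>{(m1,m2). m1 + m2 = m}. f m1 * g m2)"
proof -
  have "Poly_Mapping.lookup (Abs_poly_mapping f * Abs_poly_mapping g) m = prod_fun f g m"
    using assms by (simp add: times_poly_mapping.rep_eq)
  also have "\<dots> = (\<Sum>(a, b). f a * g b when m = a + b)"
    using assms by (rule prod_fun_unfold_prod)
  also have "\<dots> = (\<Sum>x\<in>{(m1,m2). m1 + m2 = m}. (case x of (a,b) \<Rightarrow> f a * g b when m = a + b))"
    by (rule Sum_any.expand_superset) (auto simp: finite_sum_decompositions)
  also have "\<dots> = (\<Sum>(m1,m2)\<in>{(m1,m2). m1 + m2 = m}. f m1 * g m2)"
    by (rule sum.cong) auto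
  finally show ?thesis .
qed

lemma lookup_coeff_times:
  assumes "admissible a" "admissible b"
  shows "Poly_Mapping.lookup (coeff a S1 * coeff b S2) m = (\<Sum>(m1,m2)\<in>{(m1,m2). m1 + m2 = m}. a (m1,S1) * b (m2,S2))"
  unfolding coeff_def using lookup_times_Abs_poly_mapping[of "\<lambda>m. a(m,S1)" "\<lambda>m. b(m,S2)" m] assms by (simp add: admissible_def)

lemma disjoint_splits_eq: "{(S1, S2). S1 \<union> S2 = S \<and> S1 \<inter> S2 = {}} = (\<lambda>S1. (S1, S - S1)) ` Pow S"
  by (auto simp: image_iff)

lemma sc_mult_apply:
  assumes "admissible a" "admissible b"
  shows "sc_mult a b (m,S) = (\<Sum>S1\<in>Pow S. sc_sign S1 (S - S1) * Poly_Mapping.lookup (coeff a S1 * coeff b (S - S1)) m)"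
proof -
  have "sc_mult a b (m,S) = (\<Sum>(m1, m2) \<in> {(m1, m2). m1 + m2 = m}.
       \<Sum>(S1, S2) \<in> {(S1, S2). S1 \<union> S2 = S \<and> S1 \<inter> S2 = {}}.
         sc_sign S1 S2 * a (m1, S1) * b (m2, S2))"
    by (simp add: sc_mult_def)
  also have "\<dots> = (\<Sum>(S1, S2) \<in> {(S1, S2). S1 \<union> S2 = S \<and> S1 \<inter> S2 = {}}.
       \<Sum>(m1, m2) \<in> {(m1, m2). m1 + m2 = m}. sc_sign S1 S2 * a (m1, S1) * b (m2, S2))"
    unfolding split_def by (rule sum.swap)
  also have "\<dots> = (\<Sum>S1 \<in> Pow S. \<Sum>(m1, m2) \<in> {(m1, m2). m1 + m2 = m}. sc_sign S1 (S - S1) * a (m1, S1) * b (m2, S - S1))"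
    unfolding disjoint_splits_eq by (subst sum.reindex) (auto intro: inj_onI)
  also have "\<dots> = (\<Sum>S1\<in>Pow S. sc_sign S1 (S - S1) * Poly_Mapping.lookup (coeff a S1 * coeff b (S - S1)) m)"
    by (rule sum.cong[OF refl]) (simp add: lookup_coeff_times[OF assms] sum_distrib_left split_def mult.assoc)
  finally show ?thesis .
qed

lemma sc_mult_infinite:
  assumes "infinite S" shows "sc_mult a b (m,S) = 0"
proof -
  have "infinite {(S1, S2). S1 \<union> S2 = S \<and> S1 \<inter> S2 = {}}"
    unfolding disjoint_splits_eq using assms
    by (subst finite_image_iff) (auto intro: inj_onI)
  then show ?thesis by (simp add: sc_mult_def)
qed

lemma admissible_mult: assumes "admissible a" "admissible b" shows "admissible (sc_mult a b)"
  unfolding admissible_def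
proof (intro conjI allI impI)
  fix S
  show "finite {m. sc_mult a b (m, S) \<noteq> 0}"
  proof (cases "finite S")
    case True
    have "{m. sc_mult a b (m, S) \<noteq> 0} \<subseteq> (\<Union>S1\<in>Pow S. Poly_Mapping.keys (coeff a S1 * coeff b (S - S1)))"
    proof
      fix m assume "m \<in> {m. sc_mult a b (m, S) \<noteq> 0}"
      then have "(\<Sum>S1\<in>Pow S. sc_sign S1 (S - S1) * Poly_Mapping.lookup (coeff a S1 * coeff b (S - S1)) m) \<noteq> 0"
        by (simp add: sc_mult_apply[OF assms])
      then obtain S1 where "S1 \<in> Pow S" "sc_sign S1 (S - S1) * Poly_Mapping.lookup (coeff a S1 * coeff b (S - S1)) m \<noteq> 0"
        using sum.not_neutral_contains_not_neutral by blast
      then show "m \<in> (\<Union>S1\<in>Pow S. Poly_Mapping.keys (coeff a S1 * coeff b (S - S1)))"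
        by (auto simp: in_keys_iff)
    qed
    moreover have "finite (\<Union>S1\<in>Pow S. Poly_Mapping.keys (coeff a S1 * coeff b (S - S1)))" using True by auto
    ultimately show ?thesis by (rule finite_subset)
  next
    case False then show ?thesis by (simp add: sc_mult_infinite)
  qed
next
  fix m S assume "infinite (S::nat set)" then show "sc_mult a b (m,S) = 0" by (rule sc_mult_infinite)
qed

definition pconst :: "'k::field \<Rightarrow> 'k kpoly" where "pconst c = Poly_Mapping.single 0 c"

lemma lookup_pconst_times: "Poly_Mapping.lookup (pconst c * p) m = c * Poly_Mapping.lookup p m"
  unfolding pconst_def by (simp flip: mult_map_scale_conv_mult add: map.rep_eq when_def)

lemma coeff_sc_mult:
  assumes "admissible a" "admissible b" "finite S"
  shows "coeff (sc_mult a b) S = (\<Sum>S1\<in>Pow S. pconst (sc_sign S1 (S - S1)) * (coeff a S1 * coeff b (S - S1)))"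
  by (rule poly_mapping_eqI)
     (simp add: lookup_coeff admissible_mult assms sc_mult_apply lookup_sum lookup_pconst_times)

lemma admissible_add: "admissible a \<Longrightarrow> admissible b \<Longrightarrow> admissible (sc_add a b)"
  unfolding admissible_def sc_add_def
proof (intro conjI allI impI, goal_cases)
  case (1 S)
  have "{m. a (m, S) + b (m, S) \<noteq> 0} \<subseteq> {m. a (m, S) \<noteq> 0} \<union> {m. b (m, S) \<noteq> 0}" by auto
  then show ?case using 1 by (meson finite_Un finite_subset)
next
  case (2 m S) then show ?case by simp
qed

lemma admissible_scale: "admissible a \<Longrightarrow> admissible (sc_scale c a)"
  unfolding admissible_def sc_scale_def
proof (intro conjI allI impI, goal_cases)
  case (1 S)
  have "{m. c * a (m, S) \<noteq> 0} \<subseteq> {m. a (m, S) \<noteq> 0}" by auto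
  then show ?case using 1 by (meson finite_subset)
next
  case (2 m S) then show ?case by simp
qed

lemma admissible_zero: "admissible sc_zero" by (simp add: admissible_def sc_zero_def)
lemma admissible_one: "admissible sc_one" by (simp add: admissible_def sc_one_def)
lemma admissible_xvar: "admissible (xvar i)"
proof -
  have "\<And>S. {m. (m, S) = (Poly_Mapping.single i 1, {})} \<subseteq> {Poly_Mapping.single i 1}" by auto
  then show ?thesis by (auto simp: admissible_def xvar_def intro: finite_subset)
qed
lemma admissible_yvar: "admissible (yvar i)"
proof -
  have "\<And>S. {m. (m, S) = (0, {i})} \<subseteq> {0}" by auto
  then show ?thesis by (auto simp: admissible_def yvar_def intro: finite_subset)
qed

lemma coeff_add: "admissible a \<Longrightarrow> admissible b \<Longrightarrow> coeff (sc_add a b) S = coeff a S + coeff b S"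
  by (rule poly_mapping_eqI) (simp add: lookup_coeff[OF admissible_add] lookup_coeff lookup_add, simp add: sc_add_def)
lemma coeff_scale: "admissible a \<Longrightarrow> coeff (sc_scale c a) S = pconst c * coeff a S"
  by (rule poly_mapping_eqI) (simp add: lookup_coeff[OF admissible_scale] lookup_coeff lookup_pconst_times, simp add: sc_scale_def)
lemma coeff_zero: "coeff sc_zero S = 0"
  by (rule poly_mapping_eqI) (simp add: lookup_coeff[OF admissible_zero], simp add: sc_zero_def)
lemma coeff_one: "coeff sc_one S = (if S = {} then 1 else 0)"
  by (rule poly_mapping_eqI) (simp add: lookup_coeff[OF admissible_one], auto simp: sc_one_def lookup_one when_def)

definition xpoly :: "nat \<Rightarrow> 'k::field kpoly" where "xpoly i = Poly_Mapping.single (Poly_Mapping.single i 1) 1"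

lemma coeff_xvar: "coeff (xvar i) S = (if S = {} then xpoly i else 0)"
  by (rule poly_mapping_eqI) (simp add: lookup_coeff[OF admissible_xvar], auto simp: xvar_def xpoly_def lookup_single when_def)
lemma coeff_yvar: "coeff (yvar i) S = (if S = {i} then 1 else 0)"
  by (rule poly_mapping_eqI) (simp add: lookup_coeff[OF admissible_yvar], auto simp: yvar_def lookup_one when_def)

lemma admissible_eqI:
  assumes "admissible a" "admissible b" "\<And>S. finite S \<Longrightarrow> coeff a S = coeff b S"
  shows "a = b"
proof (rule ext, clarify)
  fix m S
  show "a (m,S) = b (m,S)"
  proof (cases "finite S")
    case True
    then show ?thesis using assms lookup_coeff by metis
  next
    case False then show ?thesis using assms(1,2) by (simp add: admissible_def)
  qed
qed

lemma pconst_mult: "pconst (x * y) = pconst x * pconst y"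
  by (simp add: pconst_def mult_single)
lemma pconst_1: "pconst 1 = 1" by (simp add: pconst_def)
lemma pconst_uminus: "pconst (- x) = - pconst x" by (simp add: pconst_def single_uminus)


lemma inversions_Un_left:
  assumes "T \<inter> U = {}"
  shows "{(i, j). i \<in> T \<union> U \<and> j \<in> W \<and> j < (i::nat)}
        = {(i, j). i \<in> T \<and> j \<in> W \<and> j < i} \<union> {(i, j). i \<in> U \<and> j \<in> W \<and> j < i}"
  by auto

lemma inversions_Un_right:
  shows "{(i, j). i \<in> T \<and> j \<in> U \<union> W \<and> j < (i::nat)}
        = {(i, j). i \<in> T \<and> j \<in> U \<and> j < i} \<union> {(i, j). i \<in> T \<and> j \<in> W \<and> j < i}"
  by auto

lemma finite_inversions: "finite T \<Longrightarrow> finite {(i, j). i \<in> T \<and> j \<in> U \<and> j < (i::nat)}"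
proof -
  assume "finite T"
  have "{(i, j). i \<in> T \<and> j \<in> U \<and> j < i} \<subseteq> T \<times> {..Max (insert 0 T)}"
    using \<open>finite T\<close> by auto (meson Max_ge finite_insert insertCI less_imp_le_nat order.trans)
  then show ?thesis using \<open>finite T\<close> by (meson finite_SigmaI finite_atMost finite_subset)
qed

lemma sc_sign_cocycle:
  assumes "finite T" "finite U" "finite W" "T \<inter> U = {}" "T \<inter> W = {}" "U \<inter> W = {}"
  shows "(sc_sign (T \<union> U) W :: 'k::field) * sc_sign T U = sc_sign T (U \<union> W) * sc_sign U W"
proof -
  have c1: "card {(i, j). i \<in> T \<union> U \<and> j \<in> W \<and> j < (i::nat)}
     = card {(i, j). i \<in> T \<and> j \<in> W \<and> j < i} + card {(i, j). i \<in> U \<and> j \<in> W \<and> j < i}"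
    unfolding inversions_Un_left[OF assms(4)] using assms by (intro card_Un_disjoint finite_inversions) auto
  have c2: "card {(i, j). i \<in> T \<and> j \<in> U \<union> W \<and> j < (i::nat)}
     = card {(i, j). i \<in> T \<and> j \<in> U \<and> j < i} + card {(i, j). i \<in> T \<and> j \<in> W \<and> j < i}"
    unfolding inversions_Un_right using assms by (intro card_Un_disjoint finite_inversions) auto
  show ?thesis unfolding sc_sign_def c1 c2 power_add by (simp add: algebra_simps)
qed

lemma sc_mult_assoc:
  fixes a b c :: "'k::field sc"
  assumes "admissible a" "admissible b" "admissible c"
  shows "sc_mult (sc_mult a b) c = sc_mult a (sc_mult b c)"
proof (rule admissible_eqI)
  show "admissible (sc_mult (sc_mult a b) c)" "admissible (sc_mult a (sc_mult b c))"
    by (simp_all add: admissible_mult assms)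
  fix S :: "nat set" assume S: "finite S"
  let ?H = "\<lambda>S1 T. pconst (sc_sign S1 (S - S1) * sc_sign T (S1 - T)) * (coeff a T * coeff b (S1 - T) * coeff c (S - S1))"
  let ?G = "\<lambda>T U W. pconst (sc_sign T (U \<union> W) * sc_sign U W) * (coeff a T * coeff b U * coeff c W)"
  have "coeff (sc_mult (sc_mult a b) c) S
      = (\<Sum>S1\<in>Pow S. \<Sum>T\<in>Pow S1. ?H S1 T)"
    using S by (simp add: coeff_sc_mult admissible_mult assms finite_subset sum_distrib_left sum_distrib_right
        pconst_mult algebra_simps)
  also have "\<dots> = (\<Sum>(S1,T)\<in>Sigma (Pow S) Pow. ?H S1 T)"
    by (rule sum.Sigma) (use S in \<open>auto intro: finite_subset\<close>)
  also have "\<dots> = (\<Sum>(T,U)\<in>Sigma (Pow S) (\<lambda>T. Pow (S - T)). ?H (T \<union> U) T)"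
    by (rule sum.reindex_bij_witness[where i="\<lambda>(T,U). (T \<union> U, T)" and j="\<lambda>(S1,T). (T, S1 - T)"])
       (auto simp: Un_absorb1 Un_absorb2 Un_Diff_cancel)
  also have "\<dots> = (\<Sum>(T,U)\<in>Sigma (Pow S) (\<lambda>T. Pow (S - T)). ?G T U (S - T - U))"
  proof (rule sum.cong[OF refl], clarify)
    fix T U assume TU: "T \<subseteq> S" "U \<subseteq> S - T"
    then have "sc_sign (T \<union> U) (S - T - U) * sc_sign T U = (sc_sign T (U \<union> (S - T - U)) * sc_sign U (S - T - U) :: 'k)"
      using S by (intro sc_sign_cocycle) (auto intro: finite_subset)
    moreover have "T \<union> U - T = U" "S - (T \<union> U) = S - T - U" using TU by auto
    ultimately show "?H (T \<union> U) T = ?G T U (S - T - U)" by (simp add: algebra_simps)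
  qed
  also have "\<dots> = (\<Sum>T\<in>Pow S. \<Sum>U\<in>Pow (S - T). ?G T U (S - T - U))"
    by (rule sum.Sigma[symmetric]) (use S in \<open>auto intro: finite_subset\<close>)
  also have "\<dots> = coeff (sc_mult a (sc_mult b c)) S"
    using S by (auto simp: coeff_sc_mult admissible_mult assms finite_subset sum_distrib_left
        sum_distrib_right pconst_mult algebra_simps Un_absorb1 intro!: sum.cong)
  finally show "coeff (sc_mult (sc_mult a b) c) S = coeff (sc_mult a (sc_mult b c)) S" .
qed

lemma sc_mult_add_left:
  assumes "admissible a" "admissible b" "admissible c"
  shows "sc_mult (sc_add a b) c = sc_add (sc_mult a c) (sc_mult b c)"
  by (rule admissible_eqI) (simp_all add: assms admissible_mult admissible_add coeff_add coeff_sc_mult finite_subset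
      sum.distrib[symmetric] algebra_simps)

lemma sc_mult_add_right:
  assumes "admissible a" "admissible b" "admissible c"
  shows "sc_mult a (sc_add b c) = sc_add (sc_mult a b) (sc_mult a c)"
  by (rule admissible_eqI) (simp_all add: assms admissible_mult admissible_add coeff_add coeff_sc_mult finite_subset
      sum.distrib[symmetric] algebra_simps)

lemma sc_mult_scale_left:
  assumes "admissible a" "admissible b"
  shows "sc_mult (sc_scale k a) b = sc_scale k (sc_mult a b)"
  by (rule admissible_eqI) (simp_all add: assms admissible_mult admissible_scale coeff_scale coeff_sc_mult finite_subset
      sum_distrib_left algebra_simps)

lemma sc_mult_scale_right:
  assumes "admissible a" "admissible b"
  shows "sc_mult a (sc_scale k b) = sc_scale k (sc_mult a b)"
  by (rule admissible_eqI) (simp_all add: assms admissible_mult admissible_scale coeff_scale coeff_sc_mult finite_subset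
      sum_distrib_left algebra_simps)

lemma sc_sign_empty_left: "sc_sign {} S = 1" by (simp add: sc_sign_def)
lemma sc_sign_empty_right: "sc_sign S {} = 1" by (simp add: sc_sign_def)

lemma sc_mult_one_left:
  assumes "admissible a" shows "sc_mult sc_one a = a"
proof (rule admissible_eqI)
  show "admissible (sc_mult sc_one a)" by (simp add: admissible_mult admissible_one assms)
  show "admissible a" by fact
  fix S :: "nat set" assume S: "finite S"
  have "coeff (sc_mult sc_one a) S = (\<Sum>S1\<in>Pow S. pconst (sc_sign S1 (S - S1)) * (coeff sc_one S1 * coeff a (S - S1)))"
    using S by (simp add: coeff_sc_mult admissible_one assms)
  also have "\<dots> = (\<Sum>S1\<in>Pow S. if S1 = {} then coeff a S else 0)"
    by (rule sum.cong[OF refl]) (auto simp: coeff_one sc_sign_empty_left pconst_1)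
  also have "\<dots> = coeff a S" using S by (simp add: sum.delta)
  finally show "coeff (sc_mult sc_one a) S = coeff a S" .
qed

lemma sc_mult_one_right:
  assumes "admissible a" shows "sc_mult a sc_one = a"
proof (rule admissible_eqI)
  show "admissible (sc_mult a sc_one)" by (simp add: admissible_mult admissible_one assms)
  show "admissible a" by fact
  fix S :: "nat set" assume S: "finite S"
  have "coeff (sc_mult a sc_one) S = (\<Sum>S1\<in>Pow S. pconst (sc_sign S1 (S - S1)) * (coeff a S1 * coeff sc_one (S - S1)))"
    using S by (simp add: coeff_sc_mult admissible_one assms)
  also have "\<dots> = (\<Sum>S1\<in>Pow S. if S1 = S then coeff a S else 0)"
    by (rule sum.cong[OF refl]) (auto simp: coeff_one sc_sign_empty_right pconst_1)
  also have "\<dots> = coeff a S" using S by (simp add: sum.delta)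
  finally show "coeff (sc_mult a sc_one) S = coeff a S" .
qed

lemma sc_mult_zero_left: "sc_mult sc_zero a = sc_zero"
  by (simp add: sc_mult_def sc_zero_def fun_eq_iff)
lemma sc_mult_zero_right: "sc_mult a sc_zero = sc_zero"
  by (simp add: sc_mult_def sc_zero_def fun_eq_iff)

definition madmissible :: "'k::field mat2 \<Rightarrow> bool" where "madmissible A \<longleftrightarrow> (\<forall>i j. admissible (A i j))"

lemma madmissible_madd: "madmissible A \<Longrightarrow> madmissible B \<Longrightarrow> madmissible (madd A B)"
  by (simp add: madmissible_def madd_def admissible_add)
lemma madmissible_mscale: "madmissible A \<Longrightarrow> madmissible (mscale c A)"
  by (simp add: madmissible_def mscale_def admissible_scale)
lemma madmissible_mmul: "madmissible A \<Longrightarrow> madmissible B \<Longrightarrow> madmissible (mmul A B)"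
  by (simp add: madmissible_def mmul_def admissible_add admissible_mult)
lemma madmissible_mone: "madmissible mone" by (simp add: madmissible_def mone_def admissible_one admissible_zero)
lemma madmissible_genmat: "madmissible (genmat a b)"
  by (auto simp: madmissible_def genmat_def admissible_xvar admissible_yvar split: ix.split)
lemma madmissible_C1: "madmissible C1" by (simp add: C1_def madmissible_genmat)
lemma madmissible_C2: "madmissible C2" by (simp add: C2_def madmissible_genmat)

lemma Falg_madmissible: "A \<in> Falg \<Longrightarrow> madmissible A"
  by (induction rule: Falg.induct)
     (auto simp: madmissible_mone madmissible_C1 madmissible_C2 madmissible_madd madmissible_mscale madmissible_mmul)

lemma mmul_assoc:
  assumes "madmissible A" "madmissible B" "madmissible C"
  shows "mmul (mmul A B) C = mmul A (mmul B C)"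
  using assms unfolding madmissible_def
  by (simp add: mmul_def fun_eq_iff[of "\<lambda>i j. _"] sc_mult_add_left sc_mult_add_right admissible_mult admissible_add sc_mult_assoc;
      simp add: sc_add_def algebra_simps)

lemma mmul_madd_left:
  assumes "madmissible A" "madmissible B" "madmissible C"
  shows "mmul (madd A B) C = madd (mmul A C) (mmul B C)"
  using assms unfolding madmissible_def
  by (simp add: mmul_def madd_def sc_mult_add_left; simp add: sc_add_def fun_eq_iff algebra_simps)

lemma mmul_madd_right:
  assumes "madmissible A" "madmissible B" "madmissible C"
  shows "mmul A (madd B C) = madd (mmul A B) (mmul A C)"
  using assms unfolding madmissible_def
  by (simp add: mmul_def madd_def sc_mult_add_right; simp add: sc_add_def fun_eq_iff algebra_simps)

lemma mmul_mscale_left: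
  assumes "madmissible A" "madmissible B"
  shows "mmul (mscale c A) B = mscale c (mmul A B)"
  using assms unfolding madmissible_def
  by (simp add: mmul_def mscale_def sc_mult_scale_left; simp add: sc_add_def sc_scale_def fun_eq_iff algebra_simps)

lemma mmul_mscale_right:
  assumes "madmissible A" "madmissible B"
  shows "mmul A (mscale c B) = mscale c (mmul A B)"
  using assms unfolding madmissible_def
  by (simp add: mmul_def mscale_def sc_mult_scale_right; simp add: sc_add_def sc_scale_def fun_eq_iff algebra_simps)

lemma sc_add_zero_left: "sc_add sc_zero a = a" by (simp add: sc_add_def sc_zero_def)
lemma sc_add_zero_right: "sc_add a sc_zero = a" by (simp add: sc_add_def sc_zero_def)

lemma mmul_mone_left:
  assumes "madmissible A" shows "mmul mone A = A"
proof (rule ext, rule ext)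
  fix i j show "mmul mone A i j = A i j"
    using assms unfolding madmissible_def
    by (cases i; cases j; simp add: mmul_def mone_def sc_mult_one_left sc_mult_zero_left sc_add_zero_left sc_add_zero_right)
qed

lemma mmul_mone_right:
  assumes "madmissible A" shows "mmul A mone = A"
proof (rule ext, rule ext)
  fix i j show "mmul A mone i j = A i j"
    using assms unfolding madmissible_def
    by (cases i; cases j; simp add: mmul_def mone_def sc_mult_one_right sc_mult_zero_right sc_add_zero_left sc_add_zero_right)
qed


section \<open>The weight grading of \<open>F\<close>\<close>

definition odd_weight :: "nat set \<Rightarrow> int" where
  "odd_weight S = int (card (S \<inter> {0,1})) - int (card (S \<inter> {2,3}))"

fun entry_weight :: "ix \<Rightarrow> ix \<Rightarrow> int" where
  "entry_weight R1 R1 = 0" | "entry_weight R2 R2 = 0" | "entry_weight R1 R2 = 1" | "entry_weight R2 R1 = -1"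

definition mgraded :: "'k::field mat2 \<Rightarrow> bool" where
  "mgraded A \<longleftrightarrow> madmissible A \<and> (\<forall>i j S. finite S \<longrightarrow>
     \<not> (S \<subseteq> {0,1,2,3} \<and> odd_weight S = entry_weight i j) \<longrightarrow> coeff (A i j) S = 0)"

lemma mgraded_madmissible: "mgraded A \<Longrightarrow> madmissible A"
  by (simp add: mgraded_def)

lemma mgraded_coeff_zero:
  "mgraded A \<Longrightarrow> finite S \<Longrightarrow> \<not> (S \<subseteq> {0,1,2,3} \<and> odd_weight S = entry_weight i j) \<Longrightarrow>
    coeff (A i j) S = 0"
  by (simp add: mgraded_def)

lemma odd_weight_split: "finite S \<Longrightarrow> S1 \<subseteq> S \<Longrightarrow> odd_weight S = odd_weight S1 + odd_weight (S - S1)"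
proof -
  assume S: "finite S" "S1 \<subseteq> S"
  have "card (S \<inter> A) = card (S1 \<inter> A) + card ((S - S1) \<inter> A)" for A
  proof -
    have "S \<inter> A = (S1 \<inter> A) \<union> ((S - S1) \<inter> A)" using S by auto
    then show ?thesis
      using S by (metis Diff_disjoint card_Un_disjoint finite_Diff finite_Int inf_commute
          inf_left_commute finite_subset Int_Diff Diff_Int_distrib2)
  qed
  then show ?thesis by (simp add: odd_weight_def)
qed

lemma entry_weight_add: "entry_weight i k + entry_weight k j = entry_weight i j"
  by (cases i; cases j; cases k; simp)

lemma coeff_mmul:
  assumes "madmissible A" "madmissible B" "finite S"
  shows "coeff (mmul A B i j) S = (\<Sum>S1\<in>Pow S. pconst (sc_sign S1 (S - S1)) *
     (coeff (A i R1) S1 * coeff (B R1 j) (S - S1) + coeff (A i R2) S1 * coeff (B R2 j) (S - S1)))"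
  using assms unfolding madmissible_def mmul_def
  by (simp add: coeff_add admissible_mult coeff_sc_mult sum.distrib[symmetric] algebra_simps)

lemma mgraded_mmul:
  assumes A: "mgraded A" and B: "mgraded B"
  shows "mgraded (mmul A B)"
  unfolding mgraded_def
proof (intro conjI allI impI)
  have gA: "madmissible A" and gB: "madmissible B" using A B by (auto simp: mgraded_def)
  then show "madmissible (mmul A B)" by (rule madmissible_mmul)
  fix i j S assume S: "finite (S::nat set)" and bad: "\<not> (S \<subseteq> {0, 1, 2, 3} \<and> odd_weight S = entry_weight i j)"
  have z: "coeff (A i k) S1 * coeff (B k j) (S - S1) = 0" if S1: "S1 \<subseteq> S" for k S1
  proof (cases "S1 \<subseteq> {0,1,2,3} \<and> odd_weight S1 = entry_weight i k")
    case True
    have "\<not> (S - S1 \<subseteq> {0,1,2,3} \<and> odd_weight (S - S1) = entry_weight k j)"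
      using bad True odd_weight_split[OF S S1] entry_weight_add[of i k j] by auto
    then have "coeff (B k j) (S - S1) = 0" using B S by (intro mgraded_coeff_zero) auto
    then show ?thesis by simp
  next
    case False
    then have "coeff (A i k) S1 = 0" using A S S1 finite_subset by (intro mgraded_coeff_zero) auto
    then show ?thesis by simp
  qed
  show "coeff (mmul A B i j) S = 0"
    unfolding coeff_mmul[OF gA gB S] by (rule sum.neutral) (simp add: z)
qed

lemma mgraded_madd: "mgraded A \<Longrightarrow> mgraded B \<Longrightarrow> mgraded (madd A B)"
  unfolding mgraded_def by (auto simp: madmissible_madd madd_def coeff_add madmissible_def admissible_add)

lemma mgraded_mscale: "mgraded A \<Longrightarrow> mgraded (mscale c A)"
  unfolding mgraded_def by (auto simp: madmissible_mscale mscale_def coeff_scale madmissible_def admissible_scale)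

lemma mgraded_mone: "mgraded mone"
  unfolding mgraded_def
proof (intro conjI madmissible_mone allI impI)
  fix i j S assume "finite (S::nat set)" "\<not> (S \<subseteq> {0, 1, 2, 3} \<and> odd_weight S = entry_weight i j)"
  then show "coeff (mone i j) S = 0" by (cases i; cases j; auto simp: mone_def coeff_one coeff_zero odd_weight_def)
qed

lemma mgraded_genmat: "mgraded (genmat a b)" if "a \<in> {0,1}" "b = a + 2"
  unfolding mgraded_def
proof (intro conjI madmissible_genmat allI impI)
  fix i j S assume "finite (S::nat set)" "\<not> (S \<subseteq> {0, 1, 2, 3} \<and> odd_weight S = entry_weight i j)"
  then show "coeff (genmat a b i j) S = 0" using that
    by (cases i; cases j; auto simp: genmat_def coeff_xvar coeff_yvar odd_weight_def)
qed

lemma mgraded_C1: "mgraded C1" by (simp add: C1_def mgraded_genmat)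
lemma mgraded_C2: "mgraded C2" by (simp add: C2_def mgraded_genmat)

lemma Falg_mgraded: "A \<in> Falg \<Longrightarrow> mgraded A"
  by (induction rule: Falg.induct)
     (auto simp: mgraded_mone mgraded_C1 mgraded_C2 mgraded_madd mgraded_mscale mgraded_mmul)


section \<open>Coefficients of odd degree at most two\<close>

lemma sc_sign_singleton: "sc_sign {a} {b} = (if b < a then -1 else 1)"
proof -
  have "{(i, j). i \<in> {a} \<and> j \<in> {b} \<and> j < (i::nat)} = (if b < a then {(a,b)} else {})" by auto
  then show ?thesis by (simp add: sc_sign_def)
qed

lemma sc_sign_insert_left:
  assumes "a \<notin> S" "S \<noteq> {}" "finite S"
  shows "sc_sign (insert a S) T = sc_sign {a} T * sc_sign S T"
proof -
  have d: "{a} \<inter> S = {}" using assms by auto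
  have "card {(i, j). i \<in> {a} \<union> S \<and> j \<in> T \<and> j < (i::nat)}
     = card {(i, j). i \<in> {a} \<and> j \<in> T \<and> j < i} + card {(i, j). i \<in> S \<and> j \<in> T \<and> j < i}"
    unfolding inversions_Un_left[OF d] using assms by (intro card_Un_disjoint finite_inversions) auto
  then show ?thesis by (simp add: sc_sign_def power_add)
qed

lemma sc_sign_insert_right:
  assumes "b \<notin> T" "T \<noteq> {}" "finite S"
  shows "sc_sign S (insert b T) = sc_sign S {b} * sc_sign S T"
proof -
  have "card {(i, j). i \<in> S \<and> j \<in> {b} \<union> T \<and> j < (i::nat)}
     = card {(i, j). i \<in> S \<and> j \<in> {b} \<and> j < i} + card {(i, j). i \<in> S \<and> j \<in> T \<and> j < i}"
    unfolding inversions_Un_right[of S "{b}" T] using assms by (intro card_Un_disjoint finite_inversions) auto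
  then show ?thesis by (simp add: sc_sign_def power_add)
qed

definition even11 :: "'k::field mat2 \<Rightarrow> 'k kpoly" where "even11 A = coeff (A R1 R1) {}"
definition even22 :: "'k::field mat2 \<Rightarrow> 'k kpoly" where "even22 A = coeff (A R2 R2) {}"
definition lin12 :: "'k::field mat2 \<Rightarrow> nat \<Rightarrow> 'k kpoly" where "lin12 A i = coeff (A R1 R2) {i}"
definition lin21 :: "'k::field mat2 \<Rightarrow> nat \<Rightarrow> 'k kpoly" where "lin21 A j = coeff (A R2 R1) {j}"
definition quad11 :: "'k::field mat2 \<Rightarrow> nat \<Rightarrow> nat \<Rightarrow> 'k kpoly" where "quad11 A i j = coeff (A R1 R1) {i,j}"
definition quad22 :: "'k::field mat2 \<Rightarrow> nat \<Rightarrow> nat \<Rightarrow> 'k kpoly" where "quad22 A i j = coeff (A R2 R2) {i,j}"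

lemmas sgn_simps = sc_sign_singleton sc_sign_insert_left sc_sign_insert_right sc_sign_empty_left sc_sign_empty_right

lemma Pow_simps: "Pow {} = {{}}" "Pow (insert a A) = Pow A \<union> insert a ` Pow A"
  by (auto simp: Pow_insert)

context
  fixes A B :: "'k::field mat2"
  assumes A: "mgraded A" and B: "mgraded B"
begin

private lemmas zero_A = mgraded_coeff_zero[OF A] and zero_B = mgraded_coeff_zero[OF B]
  and low_degree_simps = coeff_mmul[OF mgraded_madmissible[OF A] mgraded_madmissible[OF B]]
    Pow_simps insert_Diff_if sgn_simps pconst_1 pconst_uminus odd_weight_def

lemma even11_mmul: "even11 (mmul A B) = even11 A * even11 B"
  unfolding even11_def by (simp add: low_degree_simps zero_A[of "{}" R1 R2])

lemma even22_mmul: "even22 (mmul A B) = even22 A * even22 B"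
  unfolding even22_def by (simp add: low_degree_simps zero_A[of "{}" R2 R1])

lemma lin12_mmul: "i \<in> {0,1} \<Longrightarrow> lin12 (mmul A B) i = even11 A * lin12 B i + lin12 A i * even22 B"
  unfolding even11_def even22_def lin12_def
  by (elim insertE; simp add: low_degree_simps zero_A zero_B)

lemma lin21_mmul: "j \<in> {2,3} \<Longrightarrow> lin21 (mmul A B) j = lin21 A j * even11 B + even22 A * lin21 B j"
  unfolding even11_def even22_def lin21_def
  by (elim insertE; simp add: low_degree_simps zero_A zero_B)

lemma quad11_mmul: "i \<in> {0,1} \<Longrightarrow> j \<in> {2,3} \<Longrightarrow>
   quad11 (mmul A B) i j = even11 A * quad11 B i j + quad11 A i j * even11 B + lin12 A i * lin21 B j"
  unfolding even11_def quad11_def lin12_def lin21_def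
  by (elim insertE emptyE; simp add: low_degree_simps zero_A zero_B)

lemma quad22_mmul: "i \<in> {0,1} \<Longrightarrow> j \<in> {2,3} \<Longrightarrow>
   quad22 (mmul A B) i j = even22 A * quad22 B i j + quad22 A i j * even22 B - lin21 A j * lin12 B i"
  unfolding even22_def quad22_def lin12_def lin21_def
  by (elim insertE emptyE; simp add: low_degree_simps zero_A zero_B)

end


definition poly_in_vars :: "nat set \<Rightarrow> 'k::field kpoly \<Rightarrow> bool" where
  "poly_in_vars V p \<longleftrightarrow> (\<forall>m \<in> Poly_Mapping.keys p. Poly_Mapping.keys m \<subseteq> V)"

lemma poly_in_vars_add: "poly_in_vars V p \<Longrightarrow> poly_in_vars V q \<Longrightarrow> poly_in_vars V (p + q)"
  using keys_add[of p q] by (auto simp: poly_in_vars_def)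

lemma poly_in_vars_mult:
  assumes "poly_in_vars V p" "poly_in_vars V q"
  shows "poly_in_vars V (p * q)"
  unfolding poly_in_vars_def
proof
  fix m assume "m \<in> Poly_Mapping.keys (p * q)"
  then obtain a b where "m = a + b" "a \<in> Poly_Mapping.keys p" "b \<in> Poly_Mapping.keys q"
    using keys_mult by blast
  then show "Poly_Mapping.keys m \<subseteq> V"
    using assms keys_add[of a b] unfolding poly_in_vars_def by blast
qed

lemma poly_in_vars_pconst_mult: "poly_in_vars V p \<Longrightarrow> poly_in_vars V (pconst c * p)"
  by (auto simp: poly_in_vars_def in_keys_iff lookup_pconst_times)

lemma poly_in_vars_one: "poly_in_vars V 1"
  by (simp add: poly_in_vars_def)

lemma poly_in_vars_xpoly: "i \<in> V \<Longrightarrow> poly_in_vars V (xpoly i)"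
  by (simp add: poly_in_vars_def xpoly_def)

lemma poly_in_disjoint_vars_eq_pconst:
  assumes "poly_in_vars V p" "poly_in_vars W p" "V \<inter> W = {}"
  shows "p = pconst (Poly_Mapping.lookup p 0)"
proof (rule poly_mapping_eqI)
  fix m
  have "m = 0" if "m \<in> Poly_Mapping.keys p"
  proof -
    have "Poly_Mapping.keys m \<subseteq> V \<inter> W" using that assms(1,2) by (auto simp: poly_in_vars_def)
    then have "Poly_Mapping.keys m = {}" using assms(3) by blast
    then show ?thesis by simp
  qed
  then show "Poly_Mapping.lookup p m = Poly_Mapping.lookup (pconst (Poly_Mapping.lookup p 0)) m"
    unfolding pconst_def lookup_single by (metis in_keys_iff when_simps)
qed


section \<open>Partial derivatives in \<open>K[X]\<close>\<close>

definition pdiff :: "nat \<Rightarrow> 'k::field kpoly \<Rightarrow> 'k kpoly" where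
  "pdiff v p = Abs_poly_mapping (\<lambda>m. of_nat (Poly_Mapping.lookup m v + 1) * Poly_Mapping.lookup p (m + Poly_Mapping.single v 1))"

lemma pdiff_finite: "finite {m. of_nat (Poly_Mapping.lookup m v + 1) * Poly_Mapping.lookup p (m + Poly_Mapping.single v 1) \<noteq> (0::'k::field)}"
proof -
  have "{m. of_nat (Poly_Mapping.lookup m v + 1) * Poly_Mapping.lookup p (m + Poly_Mapping.single v 1) \<noteq> (0::'k)}
     \<subseteq> (\<lambda>m. m + Poly_Mapping.single v 1) -` Poly_Mapping.keys p"
    by (auto simp: in_keys_iff)
  moreover have "finite ((\<lambda>m. m + Poly_Mapping.single v (1::nat)) -` Poly_Mapping.keys p)"
    by (rule finite_vimageI) (auto intro: inj_onI)
  ultimately show ?thesis by (rule finite_subset)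
qed

lemma lookup_pdiff: "Poly_Mapping.lookup (pdiff v p) m = of_nat (Poly_Mapping.lookup m v + 1) * Poly_Mapping.lookup p (m + Poly_Mapping.single v 1)"
  unfolding pdiff_def lookup_Abs_poly_mapping[OF pdiff_finite] ..

lemma pdiff_add: "pdiff v (p + q) = pdiff v p + pdiff v q"
  by (rule poly_mapping_eqI) (simp add: lookup_pdiff lookup_add algebra_simps)

lemma pdiff_zero: "pdiff v 0 = 0"
  by (rule poly_mapping_eqI) (simp add: lookup_pdiff)

lemma pdiff_single: "pdiff v (Poly_Mapping.single m a) = Poly_Mapping.single (m - Poly_Mapping.single v 1) (of_nat (Poly_Mapping.lookup m v) * a)"
proof (rule poly_mapping_eqI)
  fix n
  show "Poly_Mapping.lookup (pdiff v (Poly_Mapping.single m a)) n =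
        Poly_Mapping.lookup (Poly_Mapping.single (m - Poly_Mapping.single v 1) (of_nat (Poly_Mapping.lookup m v) * a)) n"
  proof (cases "m = n + Poly_Mapping.single v 1")
    case True
    then have "m - Poly_Mapping.single v 1 = n"
      by (metis add_diff_cancel_right')
    then show ?thesis using True by (simp add: lookup_pdiff lookup_single lookup_add)
  next
    case False
    have "Poly_Mapping.lookup m v = 0" if "m - Poly_Mapping.single v 1 = n"
    proof (rule ccontr)
      assume "Poly_Mapping.lookup m v \<noteq> 0"
      then have "m = n + Poly_Mapping.single v 1" using that
        by (intro poly_mapping_eqI) (auto simp: lookup_add minus_poly_mapping.rep_eq lookup_single when_def)
      with False show False by simp
    qed
    then show ?thesis using False by (auto simp: lookup_pdiff lookup_single when_def)
  qed
qed

lemma update_eq_add: "a \<notin> Poly_Mapping.keys f \<Longrightarrow> Poly_Mapping.update a b f = f + Poly_Mapping.single a b"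
  by (rule poly_mapping_eqI) (auto simp: lookup_update lookup_add lookup_single in_keys_iff when_def)

lemma poly_mapping_single_induct:
  assumes "P 0" "\<And>f a b. P f \<Longrightarrow> P (f + Poly_Mapping.single a b)"
  shows "P f"
  by (induction f rule: update_induct) (auto simp: update_eq_add assms)

lemma add_diff_single_commute:
  fixes m n :: "nat \<Rightarrow>\<^sub>0 nat"
  assumes "Poly_Mapping.lookup m v \<noteq> 0"
  shows "n + (m - Poly_Mapping.single v 1) = m + n - Poly_Mapping.single v 1"
        "(m - Poly_Mapping.single v 1) + n = m + n - Poly_Mapping.single v 1"
        "n + (m - Poly_Mapping.single v 1) = n + m - Poly_Mapping.single v 1"
        "(m - Poly_Mapping.single v 1) + n = n + m - Poly_Mapping.single v 1"
  using assms by (auto intro!: poly_mapping_eqI simp: lookup_add minus_poly_mapping.rep_eq lookup_single when_def)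

lemma pdiff_single_mult_single:
  "pdiff v (Poly_Mapping.single m a * Poly_Mapping.single n b)
   = pdiff v (Poly_Mapping.single m a) * Poly_Mapping.single n b + Poly_Mapping.single m a * pdiff v (Poly_Mapping.single n b)"
proof (cases "Poly_Mapping.lookup m v = 0"; cases "Poly_Mapping.lookup n v = 0")
  assume "Poly_Mapping.lookup m v = 0" "Poly_Mapping.lookup n v = 0"
  then show ?thesis by (simp add: mult_single pdiff_single lookup_add)
next
  assume a: "Poly_Mapping.lookup m v = 0" "Poly_Mapping.lookup n v \<noteq> 0"
  then show ?thesis
    by (simp add: mult_single pdiff_single lookup_add add_diff_single_commute[OF a(2), simplified]
        add.commute mult.commute mult.left_commute mult.assoc)
next
  assume a: "Poly_Mapping.lookup m v \<noteq> 0" "Poly_Mapping.lookup n v = 0"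
  then show ?thesis by (simp add: mult_single pdiff_single lookup_add add_diff_single_commute[OF a(1), simplified] algebra_simps)
next
  assume a: "Poly_Mapping.lookup m v \<noteq> 0" "Poly_Mapping.lookup n v \<noteq> 0"
  then show ?thesis
    by (simp add: mult_single pdiff_single lookup_add add_diff_single_commute[OF a(1), simplified]
        add_diff_single_commute[OF a(2), simplified]
      single_add[symmetric] algebra_simps)
qed

lemma pdiff_mult: "pdiff v (p * q) = pdiff v p * q + p * pdiff v q"
proof (induction p rule: poly_mapping_single_induct)
  case 1 then show ?case by (simp add: pdiff_zero)
next
  case (2 f a b)
  have "pdiff v (Poly_Mapping.single a b * q) = pdiff v (Poly_Mapping.single a b) * q + Poly_Mapping.single a b * pdiff v q"
  proof (induction q rule: poly_mapping_single_induct)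
    case 1 then show ?case by (simp add: pdiff_zero)
  next
    case (2 g c d)
    then show ?case by (simp add: distrib_left distrib_right pdiff_add pdiff_single_mult_single algebra_simps)
  qed
  then show ?case using 2 by (simp add: distrib_left distrib_right pdiff_add algebra_simps)
qed

lemma pdiff_pconst: "pdiff v (pconst c) = 0"
  unfolding pconst_def by (simp add: pdiff_single)

lemma pdiff_one: "pdiff v 1 = 0"
  using pdiff_pconst[of v 1] by (simp add: pconst_1)

lemma pdiff_xpoly: "pdiff v (xpoly k) = (if k = v then 1 else 0)"
  unfolding xpoly_def by (simp add: pdiff_single lookup_single when_def)


section \<open>Differential relations satisfied by \<open>F\<close>\<close>

definition D0 :: "'k::field kpoly" where "D0 = xpoly 0 - xpoly 2"
definition D1 :: "'k::field kpoly" where "D1 = xpoly 1 - xpoly 3"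

lemma xpoly_inject: "xpoly i = (xpoly j :: 'k::field kpoly) \<longleftrightarrow> i = j"
proof
  assume eq: "xpoly i = (xpoly j :: 'k kpoly)"
  have "Poly_Mapping.lookup (xpoly i :: 'k kpoly) (Poly_Mapping.single i 1) = 1"
    by (simp add: xpoly_def)
  then have "Poly_Mapping.lookup (xpoly j :: 'k kpoly) (Poly_Mapping.single i 1) = 1"
    by (simp only: eq)
  then have "Poly_Mapping.single j 1 = (Poly_Mapping.single i 1 :: nat \<Rightarrow>\<^sub>0 nat)"
    by (simp add: xpoly_def lookup_single when_def split: if_splits)
  then have "Poly_Mapping.lookup (Poly_Mapping.single j 1) i = (1::nat)"
    by simp
  then show "i = j" by (simp add: lookup_single when_def split: if_splits)
qed simp

lemma D0_nonzero: "(D0 :: 'k::field kpoly) \<noteq> 0"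
  using xpoly_inject[of 0 2] by (simp add: D0_def)

lemma D1_nonzero: "(D1 :: 'k::field kpoly) \<noteq> 0"
  using xpoly_inject[of 1 3] by (simp add: D1_def)

text \<open>In the relations for \<open>quad\<close>, the derivative is taken in the diagonal variable of the
  generator \<open>C\<^sub>1\<close> or \<open>C\<^sub>2\<close> that contains \<open>y\<^sub>i\<close> resp. \<open>y\<^sub>j\<close>.\<close>

definition rel12 :: "'k::field mat2 \<Rightarrow> 'k kpoly" where
  "rel12 A = D0 * lin12 A 0 + D1 * lin12 A 1 - (even11 A - even22 A)"
definition rel21 :: "'k::field mat2 \<Rightarrow> 'k kpoly" where
  "rel21 A = D0 * lin21 A 2 + D1 * lin21 A 3 - (even11 A - even22 A)"
definition rel11_col :: "'k::field mat2 \<Rightarrow> nat \<Rightarrow> 'k kpoly" where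
  "rel11_col A j = D0 * quad11 A 0 j + D1 * quad11 A 1 j - (pdiff (j - 2) (even11 A) - lin21 A j)"
definition rel11_row :: "'k::field mat2 \<Rightarrow> nat \<Rightarrow> 'k kpoly" where
  "rel11_row A i = quad11 A i 2 * D0 + quad11 A i 3 * D1 - (pdiff i (even11 A) - lin12 A i)"
definition rel22_col :: "'k::field mat2 \<Rightarrow> nat \<Rightarrow> 'k kpoly" where
  "rel22_col A j = D0 * quad22 A 0 j + D1 * quad22 A 1 j - (pdiff j (even22 A) - lin21 A j)"
definition rel22_row :: "'k::field mat2 \<Rightarrow> nat \<Rightarrow> 'k kpoly" where
  "rel22_row A i = quad22 A i 2 * D0 + quad22 A i 3 * D1 - (pdiff (i + 2) (even22 A) - lin12 A i)"

lemmas rel_defs = rel12_def rel21_def rel11_col_def rel11_row_def rel22_col_def rel22_row_def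

definition F_relations :: "'k::field mat2 \<Rightarrow> bool" where
  "F_relations A \<longleftrightarrow> rel12 A = 0 \<and> rel21 A = 0 \<and>
     (\<forall>j\<in>{2,3}. rel11_col A j = 0 \<and> rel22_col A j = 0) \<and>
     (\<forall>i\<in>{0,1}. rel11_row A i = 0 \<and> rel22_row A i = 0) \<and>
     poly_in_vars {0,1} (even11 A) \<and> poly_in_vars {2,3} (even22 A)"

lemma low_coeffs_madd:
  assumes "madmissible A" "madmissible B"
  shows "even11 (madd A B) = even11 A + even11 B" "even22 (madd A B) = even22 A + even22 B"
    "lin12 (madd A B) i = lin12 A i + lin12 B i" "lin21 (madd A B) j = lin21 A j + lin21 B j"
    "quad11 (madd A B) i j = quad11 A i j + quad11 B i j" "quad22 (madd A B) i j = quad22 A i j + quad22 B i j"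
  using assms by (simp_all add: even11_def even22_def lin12_def lin21_def quad11_def quad22_def madd_def coeff_add madmissible_def)

lemma low_coeffs_mscale:
  assumes "madmissible A"
  shows "even11 (mscale c A) = pconst c * even11 A" "even22 (mscale c A) = pconst c * even22 A"
    "lin12 (mscale c A) i = pconst c * lin12 A i" "lin21 (mscale c A) j = pconst c * lin21 A j"
    "quad11 (mscale c A) i j = pconst c * quad11 A i j" "quad22 (mscale c A) i j = pconst c * quad22 A i j"
  using assms by (simp_all add: even11_def even22_def lin12_def lin21_def quad11_def quad22_def mscale_def coeff_scale madmissible_def)

lemma low_coeffs_mone:
  "even11 mone = 1" "even22 mone = 1" "lin12 mone i = 0" "lin21 mone j = 0" "quad11 mone i j = 0" "quad22 mone i j = 0"
  by (simp_all add: even11_def even22_def lin12_def lin21_def quad11_def quad22_def mone_def coeff_one coeff_zero)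

lemma low_coeffs_C1:
  "even11 C1 = xpoly 0" "even22 C1 = xpoly 2" "lin12 C1 i = (if i = 0 then 1 else 0)" "lin21 C1 j = (if j = 2 then 1 else 0)"
  "quad11 C1 i j = 0" "quad22 C1 i j = 0"
  by (simp_all add: even11_def even22_def lin12_def lin21_def quad11_def quad22_def C1_def genmat_def coeff_xvar coeff_yvar)

lemma low_coeffs_C2:
  "even11 C2 = xpoly 1" "even22 C2 = xpoly 3" "lin12 C2 i = (if i = 1 then 1 else 0)" "lin21 C2 j = (if j = 3 then 1 else 0)"
  "quad11 C2 i j = 0" "quad22 C2 i j = 0"
  by (simp_all add: even11_def even22_def lin12_def lin21_def quad11_def quad22_def C2_def genmat_def coeff_xvar coeff_yvar)

lemma F_relations_mone: "F_relations mone"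
  by (simp add: F_relations_def rel_defs low_coeffs_mone pdiff_one poly_in_vars_one)

lemma F_relations_C1: "F_relations C1"
  by (simp add: F_relations_def rel_defs low_coeffs_C1 pdiff_xpoly D0_def poly_in_vars_xpoly)

lemma F_relations_C2: "F_relations C2"
  by (simp add: F_relations_def rel_defs low_coeffs_C2 pdiff_xpoly D1_def poly_in_vars_xpoly)

lemma F_relations_madd:
  assumes "madmissible A" "madmissible B" "F_relations A" "F_relations B"
  shows "F_relations (madd A B)"
proof -
  have "rel12 (madd A B) = rel12 A + rel12 B" "rel21 (madd A B) = rel21 A + rel21 B"
    "rel11_col (madd A B) j = rel11_col A j + rel11_col B j"
    "rel11_row (madd A B) i = rel11_row A i + rel11_row B i"
    "rel22_col (madd A B) j = rel22_col A j + rel22_col B j"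
    "rel22_row (madd A B) i = rel22_row A i + rel22_row B i" for i j
    by (simp_all add: rel_defs low_coeffs_madd assms(1,2) pdiff_add algebra_simps)
  then show ?thesis
    using assms(3,4) by (simp add: F_relations_def low_coeffs_madd assms(1,2) poly_in_vars_add)
qed

lemma F_relations_mscale:
  assumes "madmissible A" "F_relations A"
  shows "F_relations (mscale c A)"
proof -
  have "rel12 (mscale c A) = pconst c * rel12 A" "rel21 (mscale c A) = pconst c * rel21 A"
    "rel11_col (mscale c A) j = pconst c * rel11_col A j"
    "rel11_row (mscale c A) i = pconst c * rel11_row A i"
    "rel22_col (mscale c A) j = pconst c * rel22_col A j"
    "rel22_row (mscale c A) i = pconst c * rel22_row A i" for i j
    by (simp_all add: rel_defs low_coeffs_mscale assms(1) pdiff_mult pdiff_pconst algebra_simps)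
  then show ?thesis
    using assms(2) by (simp add: F_relations_def low_coeffs_mscale assms(1) poly_in_vars_pconst_mult)
qed

lemma F_relations_mmul:
  assumes s: "mgraded A" "mgraded B" and "F_relations A" "F_relations B"
  shows "F_relations (mmul A B)"
proof -
  note m = even11_mmul[OF s] even22_mmul[OF s] lin12_mmul[OF s] lin21_mmul[OF s]
    quad11_mmul[OF s] quad22_mmul[OF s]
  have "rel12 (mmul A B) = even11 A * rel12 B + rel12 A * even22 B"
    "rel21 (mmul A B) = even22 A * rel21 B + rel21 A * even11 B"
    by (simp_all add: rel_defs m algebra_simps)
  moreover have "rel11_col (mmul A B) j = even11 A * rel11_col B j + rel11_col A j * even11 B + rel12 A * lin21 B j"
    "rel22_col (mmul A B) j = even22 A * rel22_col B j + rel22_col A j * even22 B - lin21 A j * rel12 B"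
    if "j \<in> {2,3}" for j
    using that by (simp_all add: rel_defs m pdiff_mult algebra_simps)
  moreover have "rel11_row (mmul A B) i = even11 A * rel11_row B i + rel11_row A i * even11 B + lin12 A i * rel21 B"
    "rel22_row (mmul A B) i = even22 A * rel22_row B i + rel22_row A i * even22 B - lin12 B i * rel21 A"
    if "i \<in> {0,1}" for i
    using that by (simp_all add: rel_defs m pdiff_mult algebra_simps)
  ultimately show ?thesis
    using assms(3,4) by (simp add: F_relations_def m poly_in_vars_mult)
qed

lemma Falg_F_relations: "A \<in> Falg \<Longrightarrow> F_relations A"
  by (induction rule: Falg.induct)
    (simp_all add: F_relations_mone F_relations_C1 F_relations_C2 F_relations_madd
      F_relations_mscale F_relations_mmul Falg_madmissible Falg_mgraded)


section \<open>The centre\<close>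

lemma centreF_commute: "Z \<in> centreF \<Longrightarrow> A \<in> Falg \<Longrightarrow> mmul Z A = mmul A Z"
  by (simp add: centreF_def)

lemma centreF_Falg: "Z \<in> centreF \<Longrightarrow> Z \<in> Falg"
  by (simp add: centreF_def)

lemma centreF_mgraded: "Z \<in> centreF \<Longrightarrow> mgraded Z"
  by (simp add: centreF_def Falg_mgraded)

lemmas lin_mmul_C =
  lin12_mmul[OF _ mgraded_C1] lin12_mmul[OF mgraded_C1] lin12_mmul[OF _ mgraded_C2] lin12_mmul[OF mgraded_C2]
  lin21_mmul[OF _ mgraded_C1] lin21_mmul[OF mgraded_C1] lin21_mmul[OF _ mgraded_C2] lin21_mmul[OF mgraded_C2]

lemma centreF_lin_zero:
  assumes Zc: "Z \<in> centreF"
  shows "lin12 Z 0 = 0" "lin12 Z 1 = 0" "lin21 Z 2 = 0" "lin21 Z 3 = 0"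
proof -
  have sZ: "mgraded Z" using Zc by (rule centreF_mgraded)
  have c1: "mmul Z C1 = mmul C1 Z" and c2: "mmul Z C2 = mmul C2 Z"
    using Zc by (simp_all add: centreF_commute Falg.gen1 Falg.gen2)
  note simps = lin_mmul_C[OF sZ] low_coeffs_C1 low_coeffs_C2 algebra_simps xpoly_inject
  have "D1 * lin12 Z 0 = 0" using arg_cong[OF c2, of "\<lambda>M. lin12 M 0"] by (simp add: simps D1_def)
  then show "lin12 Z 0 = 0" by (simp add: D1_nonzero)
  have "D0 * lin12 Z 1 = 0" using arg_cong[OF c1, of "\<lambda>M. lin12 M 1"] by (simp add: simps D0_def)
  then show "lin12 Z 1 = 0" by (simp add: D0_nonzero)
  have "D1 * lin21 Z 2 = 0" using arg_cong[OF c2, of "\<lambda>M. lin21 M 2"] by (simp add: simps D1_def)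
  then show "lin21 Z 2 = 0" by (simp add: D1_nonzero)
  have "D0 * lin21 Z 3 = 0" using arg_cong[OF c1, of "\<lambda>M. lin21 M 3"] by (simp add: simps D0_def)
  then show "lin21 Z 3 = 0" by (simp add: D0_nonzero)
qed

lemma centreF_even22_eq_even11:
  assumes Zc: "Z \<in> centreF"
  shows "even22 Z = even11 Z"
proof -
  have "mmul Z C2 = mmul C2 Z" using Zc by (simp add: centreF_commute Falg.gen2)
  then have "lin12 (mmul Z C2) 1 = lin12 (mmul C2 Z) 1" by simp
  then show ?thesis
    using centreF_lin_zero(2)[OF Zc] by (simp add: lin_mmul_C[OF centreF_mgraded[OF Zc]] low_coeffs_C2)
qed

lemma centreF_even11_pconst:
  assumes Zc: "Z \<in> centreF"
  shows "even11 Z = pconst (Poly_Mapping.lookup (even11 Z) 0)"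
proof (rule poly_in_disjoint_vars_eq_pconst)
  have "F_relations Z" using Zc by (simp add: centreF_def Falg_F_relations)
  then show "poly_in_vars {0,1} (even11 Z)" "poly_in_vars {2,3} (even11 Z)"
    by (simp_all add: F_relations_def flip: centreF_even22_eq_even11[OF Zc])
qed auto


lemma subset_0123_cases:
  assumes "S \<subseteq> {0,1,2,3::nat}"
  shows "S = {} \<or> S = {0} \<or> S = {1} \<or> S = {2} \<or> S = {3} \<or> S = {0,1} \<or> S = {0,2} \<or> S = {0,3} \<or>
         S = {1,2} \<or> S = {1,3} \<or> S = {2,3} \<or> S = {0,1,2} \<or> S = {0,1,3} \<or> S = {0,2,3} \<or>
         S = {1,2,3} \<or> S = {0,1,2,3}"
proof -
  have "S = (if 0 \<in> S then {0} else {}) \<union> (if 1 \<in> S then {1} else {}) \<union>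
            (if 2 \<in> S then {2} else {}) \<union> (if 3 \<in> S then {3} else {})"
    using assms by auto
  then show ?thesis
    by (cases "0 \<in> S"; cases "1 \<in> S"; cases "2 \<in> S"; cases "3 \<in> S") (simp_all add: insert_commute)
qed

lemma odd_weight_subsets:
  assumes "S \<subseteq> {0,1,2,3}"
  shows "odd_weight S = 0 \<Longrightarrow> S = {} \<or> S = {0,2} \<or> S = {0,3} \<or> S = {1,2} \<or> S = {1,3} \<or> S = {0,1,2,3}"
    and "odd_weight S = 1 \<Longrightarrow> S = {0} \<or> S = {1} \<or> S = {0,1,2} \<or> S = {0,1,3}"
    and "odd_weight S = -1 \<Longrightarrow> S = {2} \<or> S = {3} \<or> S = {0,2,3} \<or> S = {1,2,3}"
proof -
  have weights: "odd_weight {} = 0" "odd_weight {0} = 1" "odd_weight {1} = 1" "odd_weight {2} = -1"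
    "odd_weight {3} = -1" "odd_weight {0,1} = 2" "odd_weight {0,2} = 0" "odd_weight {0,3} = 0"
    "odd_weight {1,2} = 0" "odd_weight {1,3} = 0" "odd_weight {2,3} = -2" "odd_weight {0,1,2} = 1"
    "odd_weight {0,1,3} = 1" "odd_weight {0,2,3} = -1" "odd_weight {1,2,3} = -1"
    "odd_weight {0,1,2,3} = 0"
    by (simp_all add: odd_weight_def)
  show "odd_weight S = 0 \<Longrightarrow> S = {} \<or> S = {0,2} \<or> S = {0,3} \<or> S = {1,2} \<or> S = {1,3} \<or> S = {0,1,2,3}"
    using subset_0123_cases[OF assms] by (elim disjE; simp only: weights; simp)
  show "odd_weight S = 1 \<Longrightarrow> S = {0} \<or> S = {1} \<or> S = {0,1,2} \<or> S = {0,1,3}"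
    using subset_0123_cases[OF assms] by (elim disjE; simp only: weights; simp)
  show "odd_weight S = -1 \<Longrightarrow> S = {2} \<or> S = {3} \<or> S = {0,2,3} \<or> S = {1,2,3}"
    using subset_0123_cases[OF assms] by (elim disjE; simp only: weights; simp)
qed

lemma mgraded_eq_mzeroI:
  assumes M: "mgraded M"
    and "even11 M = 0" "even22 M = 0" "lin12 M 0 = 0" "lin12 M 1 = 0" "lin21 M 2 = 0" "lin21 M 3 = 0"
    "quad11 M 0 2 = 0" "quad11 M 0 3 = 0" "quad11 M 1 2 = 0" "quad11 M 1 3 = 0"
    "quad22 M 0 2 = 0" "quad22 M 0 3 = 0" "quad22 M 1 2 = 0" "quad22 M 1 3 = 0"
    "coeff (M R1 R2) {0,1,2} = 0" "coeff (M R1 R2) {0,1,3} = 0"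
    "coeff (M R2 R1) {0,2,3} = 0" "coeff (M R2 R1) {1,2,3} = 0"
    "coeff (M R1 R1) {0,1,2,3} = 0" "coeff (M R2 R2) {0,1,2,3} = 0"
  shows "M = mzero"
proof (rule ext, rule ext)
  fix i j
  note vanish = assms(2-)[unfolded even11_def even22_def lin12_def lin21_def quad11_def quad22_def]
  have "coeff (M i j) S = 0" if S: "finite S" for S
  proof (cases "S \<subseteq> {0,1,2,3} \<and> odd_weight S = entry_weight i j")
    case True
    then show ?thesis using odd_weight_subsets[of S] vanish by (cases i; cases j) auto
  next
    case False
    then show ?thesis by (rule mgraded_coeff_zero[OF M S])
  qed
  then show "M i j = mzero i j"
    unfolding mzero_def using M
    by (intro admissible_eqI) (simp_all add: mgraded_def madmissible_def admissible_zero coeff_zero)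
qed


section \<open>Top-degree coefficients\<close>

lemma sum_Pow_insert:
  assumes "finite A" "a \<notin> A"
  shows "(\<Sum>S\<in>Pow (insert a A). f S) = (\<Sum>S\<in>Pow A. f S) + (\<Sum>S\<in>Pow A. f (insert a S))"
proof -
  have "Pow (insert a A) = Pow A \<union> insert a ` Pow A" by (rule Pow_insert)
  moreover have "Pow A \<inter> insert a ` Pow A = {}" using assms by auto
  moreover have "inj_on (insert a) (Pow A)"
  proof (rule inj_onI)
    fix U V assume "U \<in> Pow A" "V \<in> Pow A" "insert a U = insert a V"
    then show "U = V" using assms by (metis Diff_insert_absorb PowD subsetD)
  qed
  ultimately show ?thesis using assms by (simp add: sum.union_disjoint sum.reindex)
qed

lemma coeff_C1: "coeff (C1 R1 R1) S = (if S = {} then xpoly 0 else 0)" "coeff (C1 R2 R2) S = (if S = {} then xpoly 2 else 0)"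
  "coeff (C1 R1 R2) S = (if S = {0} then 1 else 0)" "coeff (C1 R2 R1) S = (if S = {2} then 1 else 0)"
  by (simp_all add: C1_def genmat_def coeff_xvar coeff_yvar)

context
  fixes Z T :: "'k::field mat2"
  assumes Z: "mgraded Z" and T: "mgraded T"
    and Z_low: "even11 Z = 0" "even22 Z = 0" "lin12 Z 0 = 0" "lin12 Z 1 = 0" "lin21 Z 2 = 0" "lin21 Z 3 = 0"
    and T_even: "even11 T = 0" "even22 T = 0"
begin

private lemmas expand = coeff_mmul[OF mgraded_madmissible[OF Z] mgraded_madmissible[OF T]]
    sum_Pow_insert insert_Diff_if
  and vanish = mgraded_coeff_zero[OF Z] mgraded_coeff_zero[OF T] odd_weight_def
  and evaluate = sgn_simps pconst_1 pconst_uminus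
    Z_low[unfolded even11_def even22_def lin12_def lin21_def, simplified]
    T_even[unfolded even11_def even22_def]

lemma top_coeff12_mmul: "j \<in> {2,3} \<Longrightarrow>
    coeff (mmul Z T R1 R2) {0,1,j} = quad11 Z 1 j * lin12 T 0 - quad11 Z 0 j * lin12 T 1"
  unfolding quad11_def lin12_def
  by (elim insertE emptyE; simp add: expand; simp add: vanish; simp add: evaluate)

lemma top_coeff21_mmul: "i \<in> {0,1} \<Longrightarrow>
    coeff (mmul Z T R2 R1) {i,2,3} = quad22 Z i 2 * lin21 T 3 - quad22 Z i 3 * lin21 T 2"
  unfolding quad22_def lin21_def
  by (elim insertE emptyE; simp add: expand; simp add: vanish; simp add: evaluate)

lemma top_coeff11_mmul: "coeff (mmul Z T R1 R1) {0,1,2,3} =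
    - quad11 Z 0 2 * quad11 T 1 3 + quad11 Z 0 3 * quad11 T 1 2
    + quad11 Z 1 2 * quad11 T 0 3 - quad11 Z 1 3 * quad11 T 0 2
    + coeff (Z R1 R2) {0,1,2} * lin21 T 3 - coeff (Z R1 R2) {0,1,3} * lin21 T 2"
  unfolding quad11_def lin21_def
  by (simp add: expand; simp add: vanish; simp add: evaluate)

lemma top_coeff22_mmul: "coeff (mmul Z T R2 R2) {0,1,2,3} =
    quad22 Z 1 2 * quad22 T 0 3 - quad22 Z 1 3 * quad22 T 0 2
    + quad22 Z 0 3 * quad22 T 1 2 - quad22 Z 0 2 * quad22 T 1 3
    - coeff (Z R2 R1) {1,2,3} * lin12 T 0 + coeff (Z R2 R1) {0,2,3} * lin12 T 1"
  unfolding quad22_def lin12_def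
  by (simp add: expand; simp add: vanish; simp add: evaluate)

end

context
  fixes Z :: "'k::field mat2"
  assumes Z: "mgraded Z" and Z_C1: "mmul Z C1 = mmul C1 Z"
begin

private lemmas expand_C1 = coeff_mmul[OF mgraded_madmissible[OF Z] madmissible_C1]
    coeff_mmul[OF madmissible_C1 mgraded_madmissible[OF Z]] sum_Pow_insert insert_Diff_if
  and vanish_C1 = mgraded_coeff_zero[OF Z] coeff_C1 odd_weight_def
  and evaluate_C1 = sgn_simps pconst_1 pconst_uminus D0_def algebra_simps

lemma commute_C1_top12: "j \<in> {2,3} \<Longrightarrow> quad11 Z 1 j - quad22 Z 1 j = D0 * coeff (Z R1 R2) {0,1,j}"
proof -
  assume j: "j \<in> {2,3}"
  have "coeff (mmul Z C1 R1 R2) {0,1,j} - coeff (mmul C1 Z R1 R2) {0,1,j}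
      = coeff (Z R1 R1) {1,j} - coeff (Z R2 R2) {1,j} - D0 * coeff (Z R1 R2) {0,1,j}"
    using j by (elim insertE emptyE; simp add: expand_C1; simp add: vanish_C1; simp add: evaluate_C1)
  then show ?thesis by (simp add: Z_C1 quad11_def quad22_def)
qed

lemma commute_C1_top21: "i \<in> {0,1} \<Longrightarrow> D0 * coeff (Z R2 R1) {i,2,3} = quad22 Z i 3 - quad11 Z i 3"
proof -
  assume i: "i \<in> {0,1}"
  have "coeff (mmul Z C1 R2 R1) {i,2,3} - coeff (mmul C1 Z R2 R1) {i,2,3}
      = D0 * coeff (Z R2 R1) {i,2,3} - coeff (Z R2 R2) {i,3} + coeff (Z R1 R1) {i,3}"
    using i by (elim insertE emptyE; simp add: expand_C1; simp add: vanish_C1; simp add: evaluate_C1)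
  then show ?thesis by (simp add: Z_C1 quad11_def quad22_def algebra_simps)
qed

end

text \<open>In the following identities, \<open>a\<^sub>i\<^sub>j\<close> and \<open>d\<^sub>i\<^sub>j\<close> stand for the \<open>quad\<close>
  coefficients of a central \<open>Z\<close>, \<open>b, c\<close> for its off-diagonal top coefficients, \<open>p, q\<close> for
  the linear coefficients of \<open>A, B\<close> and \<open>G\<close> for their \<open>even11 - even22\<close>.\<close>

lemma top_coeff11_identity:
  fixes D0 D1 a02 a03 a12 a13 d12 d13 b2 b3 pA0 pA1 pB0 pB1 qA2 qA3 qB2 qB3 G1 G2 :: "'a::idom"
  assumes "D0*a02 + D1*a12 = 0" "D0*a03 + D1*a13 = 0" "a02*D0 + a03*D1 = 0" "a12*D0 + a13*D1 = 0"
    "d12*D0 + d13*D1 = 0" "a12 - d12 = D0*b2" "a13 - d13 = D0*b3"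
    "D0*pA0 + D1*pA1 = G1" "D0*qA2 + D1*qA3 = G1" "D0*pB0 + D1*pB1 = G2" "D0*qB2 + D1*qB3 = G2"
  shows "D0^3 * (-a02*(pA1*qB3 - pB1*qA3) + a03*(pA1*qB2 - pB1*qA2) + a12*(pA0*qB3 - pB0*qA3)
          - a13*(pA0*qB2 - pB0*qA2) + b2*(qA3*G2 - qB3*G1) - b3*(qA2*G2 - qB2*G1)) = 0"
  using assms by algebra

lemma top_coeff22_identity:
  fixes D0 D1 a03 a13 d02 d03 d12 d13 c0 c1 pA0 pA1 pB0 pB1 qA2 qA3 qB2 qB3 G1 G2 :: "'a::idom"
  assumes "D0*d02 + D1*d12 = 0" "D0*d03 + D1*d13 = 0" "d02*D0 + d03*D1 = 0" "d12*D0 + d13*D1 = 0"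
    "D0*a03 + D1*a13 = 0" "D0*c0 = d03 - a03" "D0*c1 = d13 - a13"
    "D0*pA0 + D1*pA1 = G1" "D0*qA2 + D1*qA3 = G1" "D0*pB0 + D1*pB1 = G2" "D0*qB2 + D1*qB3 = G2"
  shows "D0^3 * (d12*(pA0*qB3 - pB0*qA3) - d13*(pA0*qB2 - pB0*qA2) + d03*(pA1*qB2 - pB1*qA2)
     - d02*(pA1*qB3 - pB1*qA3) - c1*(pB0*G1 - pA0*G2) + c0*(pB1*G1 - pA1*G2)) = 0"
  using assms by algebra

lemma top_coeff12_identity:
  fixes D0 D1 a0 a1 pA0 pA1 pB0 pB1 G1 G2 :: "'a::idom"
  assumes "D0*a0 + D1*a1 = 0" "D0*pA0 + D1*pA1 = G1" "D0*pB0 + D1*pB1 = G2"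
  shows "D0 * (a1*(pB0*G1 - pA0*G2) - a0*(pB1*G1 - pA1*G2)) = 0"
  using assms by algebra

lemma top_coeff21_identity:
  fixes D0 D1 d2 d3 qA2 qA3 qB2 qB3 G1 G2 :: "'a::idom"
  assumes "d2*D0 + d3*D1 = 0" "D0*qA2 + D1*qA3 = G1" "D0*qB2 + D1*qB3 = G2"
  shows "D1 * (d2*(qA3*G2 - qB3*G1) - d3*(qA2*G2 - qB2*G1)) = 0"
  using assms by algebra


section \<open>The ideal property\<close>

definition centre_ideal :: "'k::field mat2 set" where
  "centre_ideal = {Z \<in> centreF. even11 Z = 0}"

lemma centre_ideal_low_coeffs:
  assumes "Z \<in> centre_ideal"
  shows "even11 Z = 0" "even22 Z = 0" "lin12 Z 0 = 0" "lin12 Z 1 = 0" "lin21 Z 2 = 0" "lin21 Z 3 = 0"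
proof -
  have Zc: "Z \<in> centreF" and "even11 Z = 0" using assms by (simp_all add: centre_ideal_def)
  then show "even11 Z = 0" "even22 Z = 0" by (simp_all add: centreF_even22_eq_even11)
  show "lin12 Z 0 = 0" "lin12 Z 1 = 0" "lin21 Z 2 = 0" "lin21 Z 3 = 0"
    using Zc by (rule centreF_lin_zero)+
qed

lemma centre_ideal_quad_relations:
  assumes "Z \<in> centre_ideal"
  shows "j \<in> {2,3} \<Longrightarrow> D0 * quad11 Z 0 j + D1 * quad11 Z 1 j = 0"
    and "i \<in> {0,1} \<Longrightarrow> quad11 Z i 2 * D0 + quad11 Z i 3 * D1 = 0"
    and "j \<in> {2,3} \<Longrightarrow> D0 * quad22 Z 0 j + D1 * quad22 Z 1 j = 0"
    and "i \<in> {0,1} \<Longrightarrow> quad22 Z i 2 * D0 + quad22 Z i 3 * D1 = 0"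
proof -
  have "F_relations Z" using assms by (simp add: centre_ideal_def centreF_def Falg_F_relations)
  note rels = this[unfolded F_relations_def rel_defs centre_ideal_low_coeffs[OF assms] pdiff_zero]
  show "j \<in> {2,3} \<Longrightarrow> D0 * quad11 Z 0 j + D1 * quad11 Z 1 j = 0"
    and "j \<in> {2,3} \<Longrightarrow> D0 * quad22 Z 0 j + D1 * quad22 Z 1 j = 0"
    using rels by (auto simp: centre_ideal_low_coeffs[OF assms, simplified])
  show "i \<in> {0,1} \<Longrightarrow> quad11 Z i 2 * D0 + quad11 Z i 3 * D1 = 0"
    and "i \<in> {0,1} \<Longrightarrow> quad22 Z i 2 * D0 + quad22 Z i 3 * D1 = 0"
    using rels by (auto simp: centre_ideal_low_coeffs[OF assms, simplified])
qed

definition mcomm :: "'k::field mat2 \<Rightarrow> 'k mat2 \<Rightarrow> 'k mat2" where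
  "mcomm A B = madd (mmul A B) (mscale (-1) (mmul B A))"

lemma mgraded_mcomm: "mgraded A \<Longrightarrow> mgraded B \<Longrightarrow> mgraded (mcomm A B)"
  by (simp add: mcomm_def mgraded_madd mgraded_mscale mgraded_mmul)

lemma low_coeffs_mcomm:
  assumes A: "mgraded A" and B: "mgraded B"
  shows "even11 (mcomm A B) = 0" "even22 (mcomm A B) = 0"
    and "i \<in> {0,1} \<Longrightarrow>
      lin12 (mcomm A B) i = lin12 B i * (even11 A - even22 A) - lin12 A i * (even11 B - even22 B)"
    and "j \<in> {2,3} \<Longrightarrow>
      lin21 (mcomm A B) j = lin21 A j * (even11 B - even22 B) - lin21 B j * (even11 A - even22 A)"
    and "i \<in> {0,1} \<Longrightarrow> j \<in> {2,3} \<Longrightarrow>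
      quad11 (mcomm A B) i j = lin12 A i * lin21 B j - lin12 B i * lin21 A j"
    and "i \<in> {0,1} \<Longrightarrow> j \<in> {2,3} \<Longrightarrow>
      quad22 (mcomm A B) i j = lin12 A i * lin21 B j - lin12 B i * lin21 A j"
proof -
  have adm: "madmissible (mmul A B)" "madmissible (mmul B A)"
    using A B by (simp_all add: mgraded_madmissible mgraded_mmul)
  note expand = mcomm_def low_coeffs_madd[OF adm(1) madmissible_mscale[OF adm(2)]]
    low_coeffs_mscale[OF adm(2)] pconst_uminus pconst_1 algebra_simps
  show "even11 (mcomm A B) = 0" "even22 (mcomm A B) = 0"
    by (simp_all add: expand even11_mmul[OF A B] even11_mmul[OF B A] even22_mmul[OF A B] even22_mmul[OF B A])
  show "i \<in> {0,1} \<Longrightarrow>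
      lin12 (mcomm A B) i = lin12 B i * (even11 A - even22 A) - lin12 A i * (even11 B - even22 B)"
    by (simp add: expand lin12_mmul[OF A B] lin12_mmul[OF B A])
  show "j \<in> {2,3} \<Longrightarrow>
      lin21 (mcomm A B) j = lin21 A j * (even11 B - even22 B) - lin21 B j * (even11 A - even22 A)"
    by (simp add: expand lin21_mmul[OF A B] lin21_mmul[OF B A])
  show "i \<in> {0,1} \<Longrightarrow> j \<in> {2,3} \<Longrightarrow>
      quad11 (mcomm A B) i j = lin12 A i * lin21 B j - lin12 B i * lin21 A j"
    by (simp add: expand quad11_mmul[OF A B] quad11_mmul[OF B A])
  show "i \<in> {0,1} \<Longrightarrow> j \<in> {2,3} \<Longrightarrow>
      quad22 (mcomm A B) i j = lin12 A i * lin21 B j - lin12 B i * lin21 A j"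
    by (simp add: expand quad22_mmul[OF A B] quad22_mmul[OF B A])
qed

lemma Falg_lin_relations:
  assumes "A \<in> Falg"
  shows "D0 * lin12 A 0 + D1 * lin12 A 1 = even11 A - even22 A"
    and "D0 * lin21 A 2 + D1 * lin21 A 3 = even11 A - even22 A"
  using Falg_F_relations[OF assms] by (simp_all add: F_relations_def rel12_def rel21_def)

context
  fixes Z A B :: "'k::field mat2"
  assumes Z: "Z \<in> centre_ideal" and A: "A \<in> Falg" and B: "B \<in> Falg"
begin

private lemma Z_graded: "mgraded Z" and Z_commute_C1: "mmul Z C1 = mmul C1 Z"
  using Z by (simp_all add: centre_ideal_def centreF_commute Falg.gen1 centreF_mgraded)

private lemmas T = low_coeffs_mcomm[OF Falg_mgraded[OF A] Falg_mgraded[OF B]]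

private lemmas top_hyps = Z_graded mgraded_mcomm[OF Falg_mgraded[OF A] Falg_mgraded[OF B]]
  centre_ideal_low_coeffs[OF Z] T(1,2)

private lemmas top = top_coeff12_mmul[OF top_hyps] top_coeff21_mmul[OF top_hyps]
  top_coeff11_mmul[OF top_hyps] top_coeff22_mmul[OF top_hyps]
  and quad = centre_ideal_quad_relations[OF Z]
  and C1_rel = commute_C1_top12[OF Z_graded Z_commute_C1] commute_C1_top21[OF Z_graded Z_commute_C1]
  and lin = Falg_lin_relations[OF A] Falg_lin_relations[OF B]

private lemma top12: "j \<in> {2,3} \<Longrightarrow> coeff (mmul Z (mcomm A B) R1 R2) {0,1,j} = 0"
  using top(1) T(3)[of 0] T(3)[of 1] top_coeff12_identity[OF quad(1) lin(1) lin(3)]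
  by (simp add: D0_nonzero)

private lemma top21: "i \<in> {0,1} \<Longrightarrow> coeff (mmul Z (mcomm A B) R2 R1) {i,2,3} = 0"
  using top(2) T(4)[of 2] T(4)[of 3] top_coeff21_identity[OF quad(4) lin(2) lin(4)]
  by (simp add: D1_nonzero)

private lemma top11: "coeff (mmul Z (mcomm A B) R1 R1) {0,1,2,3} = 0"
  using top(3) T(4)[of 2] T(4)[of 3] T(5)[of 0 2] T(5)[of 0 3] T(5)[of 1 2] T(5)[of 1 3]
    top_coeff11_identity[OF quad(1)[of 2] quad(1)[of 3] quad(2)[of 0] quad(2)[of 1] quad(4)[of 1]
      C1_rel(1)[of 2] C1_rel(1)[of 3] lin]
  by (simp add: D0_nonzero)

private lemma top22: "coeff (mmul Z (mcomm A B) R2 R2) {0,1,2,3} = 0"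
  using top(4) T(3)[of 0] T(3)[of 1] T(6)[of 0 2] T(6)[of 0 3] T(6)[of 1 2] T(6)[of 1 3]
    top_coeff22_identity[OF quad(3)[of 2] quad(3)[of 3] quad(4)[of 0] quad(4)[of 1] quad(1)[of 3]
      C1_rel(2)[of 0] C1_rel(2)[of 1] lin]
  by (simp add: D0_nonzero)

lemma centre_ideal_mmul_mcomm: "mmul Z (mcomm A B) = mzero"
proof (rule mgraded_eq_mzeroI)
  note ZT = top_hyps(1,2)
  note low = even11_mmul[OF ZT] even22_mmul[OF ZT] lin12_mmul[OF ZT] lin21_mmul[OF ZT]
    quad11_mmul[OF ZT] quad22_mmul[OF ZT] centre_ideal_low_coeffs[OF Z, simplified] T(1,2)
  show "mgraded (mmul Z (mcomm A B))" using ZT by (rule mgraded_mmul)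
  show "even11 (mmul Z (mcomm A B)) = 0" "even22 (mmul Z (mcomm A B)) = 0"
    "lin12 (mmul Z (mcomm A B)) 0 = 0" "lin12 (mmul Z (mcomm A B)) 1 = 0"
    "lin21 (mmul Z (mcomm A B)) 2 = 0" "lin21 (mmul Z (mcomm A B)) 3 = 0"
    "quad11 (mmul Z (mcomm A B)) 0 2 = 0" "quad11 (mmul Z (mcomm A B)) 0 3 = 0"
    "quad11 (mmul Z (mcomm A B)) 1 2 = 0" "quad11 (mmul Z (mcomm A B)) 1 3 = 0"
    "quad22 (mmul Z (mcomm A B)) 0 2 = 0" "quad22 (mmul Z (mcomm A B)) 0 3 = 0"
    "quad22 (mmul Z (mcomm A B)) 1 2 = 0" "quad22 (mmul Z (mcomm A B)) 1 3 = 0"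
    by (simp_all add: low)
  show "coeff (mmul Z (mcomm A B) R1 R2) {0,1,2} = 0" "coeff (mmul Z (mcomm A B) R1 R2) {0,1,3} = 0"
    "coeff (mmul Z (mcomm A B) R2 R1) {0,2,3} = 0" "coeff (mmul Z (mcomm A B) R2 R1) {1,2,3} = 0"
    using top12[of 2] top12[of 3] top21[of 0] top21[of 1] by simp_all
  show "coeff (mmul Z (mcomm A B) R1 R1) {0,1,2,3} = 0" "coeff (mmul Z (mcomm A B) R2 R2) {0,1,2,3} = 0"
    by (rule top11, rule top22)
qed
end

lemma madd_neg_eq_mzeroD: "madd P (mscale (-1) Q) = mzero \<Longrightarrow> P = Q"
  by (auto simp: madd_def mscale_def sc_add_def sc_scale_def mzero_def sc_zero_def fun_eq_iff)

lemma centre_ideal_mmul_commute: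
  assumes Z: "Z \<in> centre_ideal" and A: "A \<in> Falg" and B: "B \<in> Falg"
  shows "mmul Z (mmul A B) = mmul Z (mmul B A)"
proof (rule madd_neg_eq_mzeroD)
  have "madmissible Z" using Z by (simp add: centre_ideal_def centreF_def Falg_madmissible)
  then show "madd (mmul Z (mmul A B)) (mscale (-1) (mmul Z (mmul B A))) = mzero"
    using centre_ideal_mmul_mcomm[OF Z A B] A B
    by (simp add: mcomm_def mmul_madd_right mmul_mscale_right madmissible_mmul madmissible_mscale
        Falg_madmissible)
qed

lemma centre_ideal_mmul_right:
  assumes Z: "Z \<in> centre_ideal" and A: "A \<in> Falg"
  shows "mmul Z A \<in> centre_ideal"
proof -
  have Zc: "Z \<in> centreF" and ZF: "Z \<in> Falg" using Z by (simp_all add: centre_ideal_def centreF_def)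
  have "mmul (mmul Z A) B = mmul B (mmul Z A)" if B: "B \<in> Falg" for B
  proof -
    note assoc = mmul_assoc[OF Falg_madmissible Falg_madmissible Falg_madmissible]
    have "mmul (mmul Z A) B = mmul Z (mmul A B)" using ZF A B by (rule assoc)
    also have "\<dots> = mmul Z (mmul B A)" using Z A B by (rule centre_ideal_mmul_commute)
    also have "\<dots> = mmul (mmul Z B) A" using ZF B A by (rule assoc[symmetric])
    also have "\<dots> = mmul (mmul B Z) A" using centreF_commute[OF Zc B] by simp
    also have "\<dots> = mmul B (mmul Z A)" using B ZF A by (rule assoc)
    finally show ?thesis .
  qed
  moreover have "even11 (mmul Z A) = 0"
    using Z A by (simp add: centre_ideal_def even11_mmul centreF_mgraded Falg_mgraded)
  ultimately show ?thesis using ZF A by (simp add: centre_ideal_def centreF_def Falg.mul)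
qed

lemma mscale_mone_Falg: "mscale c mone \<in> Falg"
  by (rule Falg.scale[OF Falg.one])

lemma mzero_Falg: "mzero \<in> Falg"
proof -
  have "mzero = mscale 0 mone"
    by (simp add: mzero_def mscale_def sc_scale_def sc_zero_def fun_eq_iff)
  then show ?thesis by (metis mscale_mone_Falg)
qed

lemma mmul_mzero_left: "mmul mzero A = mzero"
  by (simp add: mmul_def mzero_def sc_mult_zero_left sc_add_zero_left fun_eq_iff)

lemma mmul_mzero_right: "mmul A mzero = mzero"
  by (simp add: mmul_def mzero_def sc_mult_zero_right sc_add_zero_left fun_eq_iff)

lemma ideal_centre_ideal: "ideal_of_F (centre_ideal :: 'k::field mat2 set)"
  unfolding ideal_of_F_def
proof (intro conjI ballI allI)
  show "centre_ideal \<subseteq> Falg" by (auto simp: centre_ideal_def centreF_def)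
  show "mzero \<in> centre_ideal"
    by (simp add: centre_ideal_def centreF_def mzero_Falg mmul_mzero_left mmul_mzero_right)
       (simp add: even11_def mzero_def coeff_zero)
next
  fix A B :: "'k mat2" assume "A \<in> centre_ideal" "B \<in> centre_ideal"
  then show "madd A B \<in> centre_ideal"
    by (auto simp: centre_ideal_def centreF_def Falg.add mmul_madd_left mmul_madd_right
        Falg_madmissible low_coeffs_madd)
next
  fix c and A :: "'k mat2" assume "A \<in> centre_ideal"
  then show "mscale c A \<in> centre_ideal"
    by (auto simp: centre_ideal_def centreF_def Falg.scale mmul_mscale_left mmul_mscale_right
        Falg_madmissible low_coeffs_mscale)
next
  fix A B :: "'k mat2" assume A: "A \<in> Falg" and B: "B \<in> centre_ideal"
  show "mmul B A \<in> centre_ideal" using B A by (rule centre_ideal_mmul_right)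
  moreover have "mmul A B = mmul B A"
    using B A by (simp add: centre_ideal_def centreF_commute)
  ultimately show "mmul A B \<in> centre_ideal" by simp
qed


section \<open>Nilpotency of \<open>I\<close>\<close>

definition odd_order_ge :: "nat \<Rightarrow> 'k::field mat2 \<Rightarrow> bool" where
  "odd_order_ge k M \<longleftrightarrow> (\<forall>i j S. finite S \<and> card S < k \<longrightarrow> coeff (M i j) S = 0)"

lemma odd_order_ge_mmul:
  assumes "madmissible A" "madmissible B" "odd_order_ge k A" "odd_order_ge l B"
  shows "odd_order_ge (k + l) (mmul A B)"
  unfolding odd_order_ge_def
proof (intro allI impI, elim conjE)
  fix i j and S :: "nat set" assume S: "finite S" and card_S: "card S < k + l"
  have vanish: "coeff (A i m) S1 * coeff (B m j) (S - S1) = 0" if S1: "S1 \<subseteq> S" for m S1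
  proof -
    have "finite S1" using S S1 by (rule finite_subset[rotated])
    then have "card S = card S1 + card (S - S1)"
      using S1 by (simp add: card_Diff_subset card_mono S)
    then have "card S1 < k \<or> card (S - S1) < l" using card_S by linarith
    with \<open>finite S1\<close> show ?thesis using assms(3,4) S unfolding odd_order_ge_def by auto
  qed
  show "coeff (mmul A B i j) S = 0"
    unfolding coeff_mmul[OF assms(1,2) S] by (rule sum.neutral) (simp add: vanish)
qed

lemma centre_ideal_odd_order_ge_1:
  assumes "Z \<in> centre_ideal"
  shows "odd_order_ge 1 Z"
  unfolding odd_order_ge_def
proof (intro allI impI, elim conjE)
  fix i j and S :: "nat set" assume "finite S" "card S < 1"
  then have "S = {}" by simp
  moreover have "mgraded Z" using assms by (simp add: centre_ideal_def centreF_mgraded)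
  ultimately show "coeff (Z i j) S = 0"
    using centre_ideal_low_coeffs(1,2)[OF assms] mgraded_coeff_zero[of Z "{}" i j]
    by (cases i; cases j; simp add: even11_def even22_def odd_weight_def)
qed

lemma mprod_centre_ideal:
  "set xs \<subseteq> centre_ideal \<Longrightarrow> mprod xs \<in> Falg \<and> odd_order_ge (length xs) (mprod xs)"
proof (induction xs)
  case Nil
  then show ?case by (simp add: mprod_def Falg.one odd_order_ge_def)
next
  case (Cons Z xs)
  then have Z: "Z \<in> centre_ideal" and ZF: "Z \<in> Falg"
    and IH: "mprod xs \<in> Falg" "odd_order_ge (length xs) (mprod xs)"
    by (auto simp: centre_ideal_def centreF_def)
  have "odd_order_ge (1 + length xs) (mmul Z (mprod xs))"
    using ZF IH centre_ideal_odd_order_ge_1[OF Z] by (intro odd_order_ge_mmul) (simp_all add: Falg_madmissible)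
  then show ?case using ZF IH(1) by (simp add: mprod_def Falg.mul)
qed

lemma mgraded_coeff_card_zero:
  assumes "mgraded M" "finite S" "4 < card S"
  shows "coeff (M i j) S = 0"
proof (rule mgraded_coeff_zero[OF assms(1,2)])
  have "\<not> S \<subseteq> {0,1,2,3}" using assms(3) card_mono[of "{0,1,2,3::nat}" S] by auto
  then show "\<not> (S \<subseteq> {0,1,2,3} \<and> odd_weight S = entry_weight i j)" by simp
qed

lemma nilpotent_centre_ideal: "nilpotent_set (centre_ideal :: 'k::field mat2 set)"
  unfolding nilpotent_set_def
proof (intro exI[of _ 5] conjI allI impI)
  fix xs :: "'k mat2 list" assume "length xs = 5 \<and> set xs \<subseteq> centre_ideal"
  then have F: "mprod xs \<in> Falg" and order: "odd_order_ge 5 (mprod xs)"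
    using mprod_centre_ideal by fastforce+
  have "coeff (mprod xs i j) S = 0" if "finite S" for i j S
    using order that mgraded_coeff_card_zero[OF Falg_mgraded[OF F] that, of i j]
    unfolding odd_order_ge_def by (cases "card S < 5") auto
  then show "mprod xs = mzero"
    using Falg_madmissible[OF F] unfolding mzero_def
    by (intro ext admissible_eqI) (simp_all add: madmissible_def admissible_zero coeff_zero)
qed simp


lemma mmul_scalar_plus_left:
  assumes "madmissible A" "madmissible B"
  shows "mmul (madd (mscale c mone) A) B = madd (mscale c B) (mmul A B)"
  using assms by (simp add: mmul_madd_left mmul_mscale_left madmissible_mscale madmissible_mone mmul_mone_left)

lemma mmul_scalar_plus_right:
  assumes "madmissible A" "madmissible B"
  shows "mmul B (madd (mscale c mone) A) = madd (mscale c B) (mmul B A)"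
  using assms by (simp add: mmul_madd_right mmul_mscale_right madmissible_mscale madmissible_mone mmul_mone_right)

lemma madd_left_cancel: "madd X Y = madd X W \<longleftrightarrow> Y = W"
  by (auto simp: madd_def sc_add_def fun_eq_iff)

lemma centreF_scalar_plus_iff:
  assumes "A \<in> Falg"
  shows "madd (mscale c mone) A \<in> centreF \<longleftrightarrow> A \<in> centreF"
proof -
  have "mmul (madd (mscale c mone) A) B = mmul B (madd (mscale c mone) A) \<longleftrightarrow> mmul A B = mmul B A"
    if "B \<in> Falg" for B
    using assms that by (simp add: mmul_scalar_plus_left mmul_scalar_plus_right madd_left_cancel Falg_madmissible)
  then show ?thesis using assms by (simp add: centreF_def Falg.add mscale_mone_Falg)
qed

lemma centreF_decompose:
  assumes Zc: "Z \<in> centreF"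
  shows "\<exists>c A. Z = madd (mscale c mone) A \<and> A \<in> centre_ideal"
proof (intro exI conjI)
  define c where "c = Poly_Mapping.lookup (even11 Z) 0"
  have ZF: "Z \<in> Falg" using Zc by (rule centreF_Falg)
  show "Z = madd (mscale c mone) (madd (mscale (- c) mone) Z)"
    by (simp add: madd_def mscale_def sc_add_def sc_scale_def fun_eq_iff algebra_simps)
  have "madd (mscale (- c) mone) Z \<in> centreF" using ZF Zc by (simp add: centreF_scalar_plus_iff)
  moreover have "even11 (madd (mscale (- c) mone) Z) = 0"
    using centreF_even11_pconst[OF Zc] Falg_madmissible[OF ZF]
    by (simp add: low_coeffs_madd madmissible_mscale madmissible_mone low_coeffs_mscale
        low_coeffs_mone c_def pconst_uminus)
  ultimately show "madd (mscale (- c) mone) Z \<in> centre_ideal" by (simp add: centre_ideal_def)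
qed

lemma even11_mscale_mone: "even11 (mscale c mone) = pconst c"
  by (simp add: low_coeffs_mscale madmissible_mone low_coeffs_mone)

lemma pconst_eq_0_iff: "pconst c = (0 :: 'k::field kpoly) \<longleftrightarrow> c = 0"
  unfolding pconst_def by (metis lookup_single_eq lookup_zero single_zero)

theorem corollary2:
  fixes dummy :: "'k::field"
  assumes "(2::'k) \<noteq> 0"
    and "infinite (UNIV :: 'k set)"
  shows "\<exists>I :: 'k mat2 set. ideal_of_F I \<and> nilpotent_set I
     \<and> centreF = {madd (mscale c mone) A | c A. A \<in> I}
     \<and> (\<forall>c. mscale c mone \<in> I \<longrightarrow> c = 0)"
proof (intro exI[of _ "centre_ideal :: 'k mat2 set"] conjI allI impI)
  show "ideal_of_F (centre_ideal :: 'k mat2 set)" by (rule ideal_centre_ideal)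
  show "nilpotent_set (centre_ideal :: 'k mat2 set)" by (rule nilpotent_centre_ideal)
  have "madd (mscale c mone) A \<in> centreF" if "A \<in> centre_ideal" for c and A :: "'k mat2"
    using that centreF_scalar_plus_iff[of A c] by (simp add: centre_ideal_def centreF_Falg)
  then show "centreF = {madd (mscale c mone) A | c A. A \<in> (centre_ideal :: 'k mat2 set)}"
    using centreF_decompose by blast
next
  fix c :: 'k assume "mscale c mone \<in> (centre_ideal :: 'k mat2 set)"
  then show "c = 0" by (simp add: centre_ideal_def even11_mscale_mone pconst_eq_0_iff)
qed

end
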